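(* Let $\widetilde v^\alpha\in\mathbb C[[t^*_*]]$, $\alpha\in[N]$, satisfy $\widetilde v^\alpha|_{t^*_{\ge1}=0}=t^\alpha_0$, $\mathcal S\widetilde v^\alpha=\delta^{\alpha,1}$ and $\mathcal D\widetilde v^\alpha=0$, and consider the associated isomorphism $\mathcal A^{\mathrm{wk}}_v\cong\mathbb C[[t^*_*]]$. Let $f\in\mathbb C[[t^*_*]]$ satisfy $\mathcal D(f)=d\cdot f$ for some $d\in\mathbb Z$. Then: (1) $f(v^*_* )\in\mathcal A^{\mathrm{rt}}_{v;d}$; (2) if $f\in\mathbb C[[t^*_*]]^{(k)}$ for some $k\ge0$, and $f=\sum_{i\ge k}h_i$ with $h_i$ homogeneous of degree $i$ when $t^\gamma_c$ is given degree $c$, then $f(v^*_* )=\sum_{i\ge k}P_i(v^1_x)^{d-i}$ with $P_i\in\mathcal A_{v;i}$, $\frac{\partial P_i}{\partial v^1_x}=0$, and $P_k=h_k|_{t^\gamma_n\mapsto v^\gamma_n}$.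
   Context: Formal variables $t^\alpha_a$, $\alpha\in[N]$, $a\ge0$. $\mathbb C[[t^*_*]]^{(d)}$ is the ideal of infinite linear combinations of monomials $\prod t^{\alpha_i}_{d_i}$ with $\sum d_i\ge d$. $\mathcal S:=\frac{\partial}{\partial t^1_0}-\sum_{k\ge0}t^\alpha_{k+1}\frac{\partial}{\partial t^\alpha_k}$, $\mathcal D:=\frac{\partial}{\partial t^1_1}-\sum_{k\ge0}t^\alpha_k\frac{\partial}{\partial t^\alpha_k}$. $\mathcal A_v=\mathbb C[[v^1,\dots,v^N]][v^\alpha_n,n\ge1]$ with $\deg v^\alpha_n=n$, $\mathcal A_{v;d}$ its degree-$d$ part; $\mathcal A^{\mathrm{wk}}_v$ is the algebra of formal power series in $v^\alpha_n-\delta^{\alpha,1}\delta_{n,1}$ ($\alpha\in[N]$, $n\ge0$), in which $(v^1_x)^{-i}=\sum_k\binom{-i}k(v^1_x-1)^k$. $\mathcal A^{\mathrm{rt}}_{v;d}\subset\mathcal A^{\mathrm{wk}}_v$ consists of elements $\sum_{i\le m}P_i(v^1_x)^i$ with $m\in\mathbb Z$, $P_i\in\mathcal A_{v;d-i}$, $\partial P_i/\partial v^1_x=0$. With $\widetilde v^\alpha_n:=\partial^n\widetilde v^\alpha/(\partial t^1_0)^n$ one has $\widetilde v^\alpha_n-t^\alpha_n-\delta_{n,1}\delta^{\alpha,1}\in\mathbb C[[t^*_*]]^{(n+1)}$, and $P\mapsto P|_{v^\gamma_n\mapsto\widetilde v^\gamma_n}$ is an algebra isomorphism $\mathcal A^{\mathrm{wk}}_v\to\mathbb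 C[[t^*_*]]$; the preimage of $f$ is denoted $f(v^*_* )$. *)

theory Defs
  imports Complex_Main "HOL-Library.Poly_Mapping" "HOL-Library.Product_Lexorder"
begin

(* Variables t^alpha_a (resp. v^alpha_n) are indexed by pairs (alpha, a) :: nat * nat,
   with alpha in {1..N}. *)
type_synonym mon = "(nat \<times> nat) \<Rightarrow>\<^sub>0 nat"
type_synonym ser = "mon \<Rightarrow> complex"

definition valid :: "nat \<Rightarrow> ser \<Rightarrow> bool" where
  "valid N f \<longleftrightarrow> (\<forall>m. f m \<noteq> 0 \<longrightarrow> fst ` Poly_Mapping.keys m \<subseteq> {1..N})"

definition gdeg :: "mon \<Rightarrow> nat" where
  "gdeg m = (\<Sum>x\<in>Poly_Mapping.keys m. snd x * Poly_Mapping.lookup m x)"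

(* formal (coefficientwise finite) sum: sum over the support of the summand *)
definition fsum :: "('i \<Rightarrow> complex) \<Rightarrow> 'i set \<Rightarrow> complex" where
  "fsum g A = (\<Sum>i\<in>{i\<in>A. g i \<noteq> 0}. g i)"

definition ser_zero :: ser where "ser_zero = (\<lambda>_. 0)"
definition ser_one :: ser where "ser_one = (\<lambda>m. if m = 0 then 1 else 0)"
definition ser_var :: "nat \<times> nat \<Rightarrow> ser" where
  "ser_var x = (\<lambda>m. if m = Poly_Mapping.single x 1 then 1 else 0)"

definition ser_mult :: "ser \<Rightarrow> ser \<Rightarrow> ser" where
  "ser_mult f g = (\<lambda>m. \<Sum>(a, b) \<in> {(a, b). a + b = m}. f a * g b)"

fun ser_pow :: "ser \<Rightarrow> nat \<Rightarrow> ser" where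
  "ser_pow f 0 = ser_one"
| "ser_pow f (Suc n) = ser_mult f (ser_pow f n)"

definition ser_pd :: "nat \<times> nat \<Rightarrow> ser \<Rightarrow> ser" where
  "ser_pd x f = (\<lambda>m. of_nat (Poly_Mapping.lookup m x + 1) * f (m + Poly_Mapping.single x 1))"

definition in_ideal :: "nat \<Rightarrow> ser \<Rightarrow> bool" where
  "in_ideal d f \<longleftrightarrow> (\<forall>m. f m \<noteq> 0 \<longrightarrow> d \<le> gdeg m)"

definition homog :: "nat \<Rightarrow> ser \<Rightarrow> bool" where
  "homog i f \<longleftrightarrow> (\<forall>m. f m \<noteq> 0 \<longrightarrow> gdeg m = i)"

definition opS :: "nat \<Rightarrow> ser \<Rightarrow> ser" where
  "opS N f = (\<lambda>m. ser_pd (1, 0) f m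
      - fsum (\<lambda>p. ser_mult (ser_var (fst p, Suc (snd p))) (ser_pd p f) m) ({1..N} \<times> UNIV))"

definition opD :: "nat \<Rightarrow> ser \<Rightarrow> ser" where
  "opD N f = (\<lambda>m. ser_pd (1, 1) f m
      - fsum (\<lambda>p. ser_mult (ser_var p) (ser_pd p f) m) ({1..N} \<times> UNIV))"

definition restr0 :: "ser \<Rightarrow> ser" where
  "restr0 f = (\<lambda>m. if (\<forall>x\<in>Poly_Mapping.keys m. snd x = 0) then f m else 0)"

definition msubst :: "(nat \<times> nat \<Rightarrow> ser) \<Rightarrow> mon \<Rightarrow> ser" where
  "msubst W m = foldr (\<lambda>x acc. ser_mult (ser_pow (W x) (Poly_Mapping.lookup m x)) acc)
                      (sorted_list_of_set (Poly_Mapping.keys m)) ser_one"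

(* tilde v^gamma_n - delta^{gamma,1} delta_{n,1}, with tilde v^gamma_n = d^n tilde v^gamma / (dt^1_0)^n *)
definition wt :: "(nat \<Rightarrow> ser) \<Rightarrow> nat \<times> nat \<Rightarrow> ser" where
  "wt vt x = (\<lambda>\<mu>. ((ser_pd (1, 0) ^^ snd x) (vt (fst x))) \<mu>
                  - (if x = (1, 1) \<and> \<mu> = 0 then 1 else 0))"

(* An element P of A^wk_v is a power series in the variables w^alpha_n = v^alpha_n - delta^{alpha,1}delta_{n,1}
   (coefficient function P on monomials in the w's).  Phi is P |-> P|_{v^gamma_n -> tilde v^gamma_n}. *)
definition Phi :: "(nat \<Rightarrow> ser) \<Rightarrow> ser \<Rightarrow> ser" where
  "Phi vt P = (\<lambda>\<mu>. fsum (\<lambda>m. P m * msubst (wt vt) m \<mu>) UNIV)"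

(* (v^1_x)^i = sum_k binom(i,k) (v^1_x - 1)^k, as element of A^wk_v (v^1_x = v^1_1) *)
definition vx_pow :: "int \<Rightarrow> ser" where
  "vx_pow i = (\<lambda>m. if Poly_Mapping.keys m \<subseteq> {(1, 1)} then (of_int i :: complex) gchoose (Poly_Mapping.lookup m (1, 1)) else 0)"

(* A_{v;e}: series in v^alpha_0, polynomial in v^alpha_n (n>=1), homogeneous of degree e *)
definition Av_deg :: "nat \<Rightarrow> int \<Rightarrow> ser \<Rightarrow> bool" where
  "Av_deg N e P \<longleftrightarrow> valid N P \<and> (\<forall>m. P m \<noteq> 0 \<longrightarrow> int (gdeg m) = e)"

(* A^rt_{v;d}.  Since dP_i/dv^1_x = 0, P_i involves no v^1_1, so its coefficients in the
   v-variables and in the w-variables coincide; P_i is embedded in A^wk_v literally. *)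
definition Art :: "nat \<Rightarrow> int \<Rightarrow> ser \<Rightarrow> bool" where
  "Art N d F \<longleftrightarrow> (\<exists>M::int. \<exists>P::int \<Rightarrow> ser.
      (\<forall>i\<le>M. Av_deg N (d - i) (P i) \<and> ser_pd (1, 1) (P i) = ser_zero)
      \<and> F = (\<lambda>\<mu>. fsum (\<lambda>i. ser_mult (P i) (vx_pow i) \<mu>) {..M}))"

end

theory Submission
  imports Defs "HOL-Library.FuncSet"
begin

(*
  Substituting t^a_n := w^a_n, where w^a_n = ~v^a_n - delta^{a,1} delta_{n,1}, is unitriangular for the
  grading deg t^a_n = n: the equation S ~v^a = delta^{a,1} says that d/dt^1_0 acts on ~v^a as the shift
  t^b_k -> t^b_{k+1}, so w^a_n is t^a_n plus terms of higher degree.  Hence the substitution Phi is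
  injective and preserves lowest-degree parts.  The equation D ~v^a = 0 gives
  D w^a_n = n w^a_n + delta_{(a,n),(1,1)}, so D acts on Phi(F) through the coefficient operator
  F_m |-> gdeg(m) F_m + (m_11 + 1) F_{m + e_11}.  Therefore D f = d f becomes the recursion
  (m_11 + 1) F_{m + e_11} = (d - gdeg m) F_m, solved by F_m = binom(d - gdeg m', m_11) F_{m'} with m'
  the monomial m stripped of v^1_1; this is the expansion F = sum_i P_i (v^1_x)^(d - i).
*)

section \<open>Monomials\<close>

abbreviation lookup :: "mon \<Rightarrow> nat \<times> nat \<Rightarrow> nat" where "lookup \<equiv> Poly_Mapping.lookup"

abbreviation keys :: "mon \<Rightarrow> (nat \<times> nat) set" where "keys \<equiv> Poly_Mapping.keys"

abbreviation mon_var :: "nat \<times> nat \<Rightarrow> mon" where "mon_var x \<equiv> Poly_Mapping.single x (1::nat)"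

definition total_degree :: "mon \<Rightarrow> nat" where "total_degree m = (\<Sum>x\<in>keys m. lookup m x)"

declare lookup_add [simp] lookup_minus [simp]

lemma lookup_single_if: "lookup (Poly_Mapping.single y k) x = (if x = y then k else 0)"
  by (simp add: lookup_single)

lemma gdeg_superset: "finite K \<Longrightarrow> keys m \<subseteq> K \<Longrightarrow> gdeg m = (\<Sum>x\<in>K. snd x * lookup m x)"
  unfolding gdeg_def by (rule sum.mono_neutral_left) (auto simp: in_keys_iff)

lemma total_degree_superset: "finite K \<Longrightarrow> keys m \<subseteq> K \<Longrightarrow> total_degree m = (\<Sum>x\<in>K. lookup m x)"
  unfolding total_degree_def by (rule sum.mono_neutral_left) (auto simp: in_keys_iff)

lemma gdeg_add [simp]: "gdeg (a + b) = gdeg a + gdeg b"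
proof -
  let ?K = "keys a \<union> keys b"
  have k: "keys (a+b) \<subseteq> ?K" by (rule keys_add)
  show ?thesis
    by (simp add: gdeg_superset[OF _ k] gdeg_superset[of ?K a] gdeg_superset[of ?K b]
        sum.distrib algebra_simps)
qed

lemma total_degree_add [simp]: "total_degree (a + b) = total_degree a + total_degree b"
proof -
  let ?K = "keys a \<union> keys b"
  have k: "keys (a+b) \<subseteq> ?K" by (rule keys_add)
  show ?thesis
    by (simp add: total_degree_superset[OF _ k] total_degree_superset[of ?K a]
        total_degree_superset[of ?K b] sum.distrib)
qed

lemma gdeg_single [simp]: "gdeg (Poly_Mapping.single x k) = snd x * k"
  by (simp add: gdeg_def)

lemma total_degree_single [simp]: "total_degree (Poly_Mapping.single x k) = k"
  by (simp add: total_degree_def)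



lemma gdeg_0 [simp]: "gdeg 0 = 0" by (simp add: gdeg_def)
lemma total_degree_0 [simp]: "total_degree 0 = 0" by (simp add: total_degree_def)
lemma total_degree_eq_0_iff: "total_degree m = 0 \<longleftrightarrow> m = 0"
  unfolding total_degree_def by (auto simp: in_keys_iff intro!: poly_mapping_eqI)

lemma lookup_le_total_degree: "lookup m x \<le> total_degree m"
proof (cases "x \<in> keys m")
  case True thus ?thesis unfolding total_degree_def by (intro member_le_sum) auto
qed (simp add: in_keys_iff)

lemma snd_le_gdeg: "x \<in> keys m \<Longrightarrow> snd x \<le> gdeg m"
proof -
  assume x: "x \<in> keys m"
  have "snd x \<le> snd x * lookup m x" using x by (simp add: in_keys_iff)
  also have "\<dots> \<le> gdeg m" unfolding gdeg_def using x by (intro member_le_sum) auto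
  finally show ?thesis .
qed

lemma gdeg_eq_0_iff: "gdeg m = 0 \<longleftrightarrow> (\<forall>x\<in>keys m. snd x = 0)"
  unfolding gdeg_def by (auto simp: in_keys_iff)

lemma minus_add_single [simp]: "k \<le> lookup m x \<Longrightarrow> m - Poly_Mapping.single x k + Poly_Mapping.single x k = m"
  by (rule poly_mapping_eqI) (auto simp: lookup_single_if)

lemma single_add_minus [simp]: "k \<le> lookup m x \<Longrightarrow> Poly_Mapping.single x k + (m - Poly_Mapping.single x k) = m"
  by (rule poly_mapping_eqI) (auto simp: lookup_single_if)

lemma gdeg_minus_mon_var: "1 \<le> lookup \<mu> q \<Longrightarrow> gdeg (\<mu> - mon_var q) + snd q = gdeg \<mu>"
  using gdeg_add[of "\<mu> - mon_var q" "mon_var q"] minus_add_single[of 1 \<mu> q] by simp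

lemma add_mon_var_eq_mon_var_iff: "(\<nu>::mon) + mon_var p = mon_var x \<longleftrightarrow> p = x \<and> \<nu> = 0"
proof
  assume h: "\<nu> + mon_var p = mon_var x"
  hence "lookup (\<nu> + mon_var p) p = lookup (mon_var x) p" by simp
  hence px: "p = x" by (auto simp: lookup_single_if split: if_splits)
  have "\<forall>y. lookup \<nu> y = 0"
  proof
    fix y
    have "lookup (\<nu> + mon_var p) y = lookup (mon_var x) y" using h by simp
    thus "lookup \<nu> y = 0" using px by (auto simp: lookup_single_if split: if_splits)
  qed
  thus "p = x \<and> \<nu> = 0" using px by (auto intro: poly_mapping_eqI)
qed auto

lemma add_single_neq_zero [simp]: "0 < (k::nat) \<Longrightarrow> (m::mon) + Poly_Mapping.single x k \<noteq> 0"
proof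
  assume "0 < k" "m + Poly_Mapping.single x k = 0"
  hence "lookup (m + Poly_Mapping.single x k) x = 0" by simp
  thus False using \<open>0 < k\<close> by (simp add: lookup_single_if)
qed

lemma keys_subset_add_mon_var: "keys m \<subseteq> keys (m + mon_var x)"
  by (auto simp: in_keys_iff)

lemma keys_minus_mon_var_subset: "keys (m - mon_var x) \<subseteq> keys m"
  by (auto simp: in_keys_iff)

lemma finite_bounded_mons: "finite K \<Longrightarrow> finite {m::mon. keys m \<subseteq> K \<and> (\<forall>x. lookup m x \<le> B)}"
proof -
  assume K: "finite K"
  let ?S = "{m::mon. keys m \<subseteq> K \<and> (\<forall>x. lookup m x \<le> B)}"
  have "inj_on (\<lambda>m. restrict (lookup m) K) ?S"
  proof (rule inj_onI)
    fix a b assume a: "a \<in> ?S" and b: "b \<in> ?S" and eq: "restrict (lookup a) K = restrict (lookup b) K"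
    show "a = b"
    proof (rule poly_mapping_eqI)
      fix x show "lookup a x = lookup b x"
      proof (cases "x \<in> K")
        case True thus ?thesis using eq by (metis restrict_apply')
      next
        case False hence "x \<notin> keys a" "x \<notin> keys b" using a b by auto
        thus ?thesis by (simp add: in_keys_iff)
      qed
    qed
  qed
  moreover have "(\<lambda>m. restrict (lookup m) K) ` ?S \<subseteq> PiE K (\<lambda>_. {..B})" by (auto simp: PiE_iff)
  moreover have "finite (PiE K (\<lambda>_. {..B}))" using K by (intro finite_PiE) auto
  ultimately show ?thesis by (meson finite_imageD finite_subset)
qed

lemma mon_induct [case_names zero add_var]: "P 0 \<Longrightarrow> (\<And>m x. P m \<Longrightarrow> P (m + mon_var x)) \<Longrightarrow> P m"
proof (induction "total_degree m" arbitrary: m rule: less_induct)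
  case less
  show ?case
  proof (cases "m = 0")
    case True thus ?thesis using less by simp
  next
    case False
    then obtain x where x: "x \<in> keys m" by (metis all_not_in_conv in_keys_iff poly_mapping_eqI lookup_zero)
    hence x1: "1 \<le> lookup m x" by (simp add: in_keys_iff)
    have eq: "m = (m - mon_var x) + mon_var x" using minus_add_single[OF x1] by simp
    have "total_degree (m - mon_var x) < total_degree m"
      using eq total_degree_add[of "m - mon_var x" "mon_var x"] by simp
    hence "P (m - mon_var x)" using less by blast
    hence "P ((m - mon_var x) + mon_var x)" using less by blast
    thus ?thesis using eq by simp
  qed
qed

definition valid_mon :: "nat \<Rightarrow> mon \<Rightarrow> bool" where "valid_mon N m \<longleftrightarrow> fst ` keys m \<subseteq> {1..N}"

lemma valid_mon_add_mon_var: "valid_mon N (m + mon_var x) \<Longrightarrow> valid_mon N m \<and> fst x \<in> {1..N}"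
proof -
  assume v: "valid_mon N (m + mon_var x)"
  have "keys m \<subseteq> keys (m + mon_var x)" "x \<in> keys (m + mon_var x)"
    by (auto simp: in_keys_iff lookup_single_if)
  thus ?thesis using v unfolding valid_mon_def by auto
qed

lemma valid_imp_valid_mon: "valid N F \<Longrightarrow> F m \<noteq> 0 \<Longrightarrow> valid_mon N m"
  by (simp add: valid_def valid_mon_def)

lemma valid_scale: "valid N F \<Longrightarrow> valid N (\<lambda>m. c m * F m)"
  unfolding valid_def by simp

abbreviation "v11 \<equiv> (1::nat, 1::nat)"

definition drop_v11 :: "mon \<Rightarrow> mon" where "drop_v11 \<mu> = \<mu> - Poly_Mapping.single v11 (lookup \<mu> v11)"

lemma lookup_drop_v11: "lookup (drop_v11 \<mu>) v11 = 0"
  by (simp add: drop_v11_def lookup_single_if)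

lemma drop_v11_add: "drop_v11 \<mu> + Poly_Mapping.single v11 (lookup \<mu> v11) = \<mu>"
  unfolding drop_v11_def by (rule minus_add_single) simp

lemma gdeg_drop_v11: "gdeg \<mu> = gdeg (drop_v11 \<mu>) + lookup \<mu> v11"
proof -
  have "gdeg (drop_v11 \<mu> + Poly_Mapping.single v11 (lookup \<mu> v11)) = gdeg (drop_v11 \<mu>) + lookup \<mu> v11"
    by simp
  thus ?thesis unfolding drop_v11_add .
qed

lemma sum_eq_single: "finite A \<Longrightarrow> p \<in> A \<Longrightarrow> (\<forall>q\<in>A. q \<noteq> p \<longrightarrow> h q = 0) \<Longrightarrow> sum h A = h p"
  by (metis (mono_tags, lifting) sum.remove sum.neutral DiffE insertCI add.right_neutral)

lemma fsum_eq_sum: "finite B \<Longrightarrow> B \<subseteq> A \<Longrightarrow> (\<forall>i\<in>A - B. g i = 0) \<Longrightarrow> fsum g A = sum g B"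
  unfolding fsum_def by (rule sum.mono_neutral_left) auto

lemma fsum_single: "i0 \<in> A \<Longrightarrow> (\<forall>i\<in>A. i \<noteq> i0 \<longrightarrow> g i = 0) \<Longrightarrow> fsum g A = g i0"
proof -
  assume i0: "i0 \<in> A" and z: "\<forall>i\<in>A. i \<noteq> i0 \<longrightarrow> g i = 0"
  show ?thesis
  proof (cases "g i0 = 0")
    case True
    hence "{i\<in>A. g i \<noteq> 0} = {}" using z by auto
    thus ?thesis using True by (simp add: fsum_def)
  next
    case False
    hence "{i\<in>A. g i \<noteq> 0} = {i0}" using z i0 by auto
    thus ?thesis by (simp add: fsum_def)
  qed
qed

lemma fsum_zero: "\<forall>i\<in>A. g i = 0 \<Longrightarrow> fsum g A = 0"
  by (simp add: fsum_def)

section \<open>Products of series\<close>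

definition splittings :: "mon \<Rightarrow> (mon \<times> mon) set" where "splittings \<mu> = {(a, b). a + b = \<mu>}"

lemma finite_splittings: "finite (splittings \<mu>)"
proof -
  have "fst ` splittings \<mu> \<subseteq> {m::mon. keys m \<subseteq> keys \<mu> \<and> (\<forall>x. lookup m x \<le> total_degree \<mu>)}"
  proof
    fix a assume "a \<in> fst ` splittings \<mu>"
    then obtain b where ab: "a + b = \<mu>" by (auto simp: splittings_def)
    have "\<forall>x. lookup a x \<le> lookup \<mu> x" using ab by auto
    hence "keys a \<subseteq> keys \<mu>" by (auto simp: in_keys_iff) (metis le_zero_eq not_gr_zero)
    moreover have "\<forall>x. lookup a x \<le> total_degree \<mu>"
      using \<open>\<forall>x. lookup a x \<le> lookup \<mu> x\<close> order.trans[OF _ lookup_le_total_degree] by blast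
    ultimately show "a \<in> {m::mon. keys m \<subseteq> keys \<mu> \<and> (\<forall>x. lookup m x \<le> total_degree \<mu>)}" by blast
  qed
  hence "finite (fst ` splittings \<mu>)"
    using finite_bounded_mons[of "keys \<mu>" "total_degree \<mu>"] finite_subset by auto
  moreover have "inj_on fst (splittings \<mu>)"
    by (rule inj_onI) (auto simp: splittings_def)
  ultimately show ?thesis using finite_image_iff by blast
qed

lemma ser_mult_eq_sum: "ser_mult f g \<mu> = (\<Sum>p\<in>splittings \<mu>. f (fst p) * g (snd p))"
  by (simp add: ser_mult_def splittings_def case_prod_beta)

lemma ser_mult_nonzeroD:
  assumes "ser_mult f g \<mu> \<noteq> 0"
  obtains a b where "a + b = \<mu>" "f a \<noteq> 0" "g b \<noteq> 0"
proof -
  obtain p where "p \<in> splittings \<mu>" "f (fst p) * g (snd p) \<noteq> 0"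
    using assms unfolding ser_mult_eq_sum by (meson sum.not_neutral_contains_not_neutral)
  then show thesis using that by (auto simp: splittings_def)
qed

lemma ser_mult_comm: "ser_mult f g = ser_mult g f"
proof (rule ext)
  fix \<mu>
  show "ser_mult f g \<mu> = ser_mult g f \<mu>"
    unfolding ser_mult_eq_sum
    by (rule sum.reindex_bij_witness[where i=prod.swap and j=prod.swap])
       (auto simp: splittings_def add.commute)
qed

definition triples :: "mon \<Rightarrow> (mon \<times> mon \<times> mon) set" where
  "triples \<mu> = {(a,b,c). a + b + c = \<mu>}"

lemma ser_mult_assoc_left_eq_sum:
  "ser_mult (ser_mult f g) h \<mu> = (\<Sum>t\<in>triples \<mu>. f (fst t) * g (fst (snd t)) * h (snd (snd t)))"
proof -
  have "ser_mult (ser_mult f g) h \<mu>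
      = (\<Sum>p\<in>splittings \<mu>. \<Sum>q\<in>splittings (fst p). f (fst q) * g (snd q) * h (snd p))"
    unfolding ser_mult_eq_sum by (simp add: sum_distrib_right)
  also have "\<dots> = (\<Sum>(p,q)\<in>Sigma (splittings \<mu>) (\<lambda>p. splittings (fst p)). f (fst q) * g (snd q) * h (snd p))"
    by (rule sum.Sigma) (auto simp: finite_splittings)
  also have "\<dots> = (\<Sum>t\<in>triples \<mu>. f (fst t) * g (fst (snd t)) * h (snd (snd t)))"
    by (rule sum.reindex_bij_witness[where i="\<lambda>(a,b,c). ((a+b, c), (a, b))" and j="\<lambda>((x,c),(a,b)). (a,b,c)"])
       (auto simp: splittings_def triples_def)
  finally show ?thesis .
qed

lemma ser_mult_assoc_right_eq_sum:
  "ser_mult f (ser_mult g h) \<mu> = (\<Sum>t\<in>triples \<mu>. f (fst t) * g (fst (snd t)) * h (snd (snd t)))"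
proof -
  have "ser_mult f (ser_mult g h) \<mu>
      = (\<Sum>p\<in>splittings \<mu>. \<Sum>q\<in>splittings (snd p). f (fst p) * g (fst q) * h (snd q))"
    unfolding ser_mult_eq_sum by (simp add: sum_distrib_left mult.assoc)
  also have "\<dots> = (\<Sum>(p,q)\<in>Sigma (splittings \<mu>) (\<lambda>p. splittings (snd p)). f (fst p) * g (fst q) * h (snd q))"
    by (rule sum.Sigma) (auto simp: finite_splittings)
  also have "\<dots> = (\<Sum>t\<in>triples \<mu>. f (fst t) * g (fst (snd t)) * h (snd (snd t)))"
    by (rule sum.reindex_bij_witness[where i="\<lambda>(a,b,c). ((a, b+c), (b, c))" and j="\<lambda>((a,x),(b,c)). (a,b,c)"])
       (auto simp: splittings_def triples_def add.assoc)
  finally show ?thesis .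
qed

lemma ser_mult_assoc: "ser_mult (ser_mult f g) h = ser_mult f (ser_mult g h)"
  by (rule ext) (simp add: ser_mult_assoc_left_eq_sum ser_mult_assoc_right_eq_sum)

lemma ser_mult_one: "ser_mult ser_one g = g"
proof (rule ext)
  fix \<mu>
  have "ser_mult ser_one g \<mu> = (\<lambda>p. ser_one (fst p) * g (snd p)) (0, \<mu>)"
    unfolding ser_mult_eq_sum
    by (rule sum_eq_single[OF finite_splittings]) (auto simp: splittings_def ser_one_def)
  thus "ser_mult ser_one g \<mu> = g \<mu>" by (simp add: ser_one_def)
qed

lemma ser_mult_one_right: "ser_mult g ser_one = g"
  using ser_mult_one ser_mult_comm by metis

interpretation ser_mult_monoid: comm_monoid_list_set ser_mult ser_one
proof -
  interpret comm_monoid ser_mult ser_one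
  proof
    fix a b c show "ser_mult (ser_mult a b) c = ser_mult a (ser_mult b c)" by (rule ser_mult_assoc)
    show "ser_mult a b = ser_mult b a" by (rule ser_mult_comm)
    show "ser_mult a ser_one = a" by (rule ser_mult_one_right)
  qed
  show "comm_monoid_list_set ser_mult ser_one" by unfold_locales
qed

lemma ser_mult_var: "ser_mult (ser_var q) g \<mu> = (if 1 \<le> lookup \<mu> q then g (\<mu> - mon_var q) else 0)"
proof (cases "1 \<le> lookup \<mu> q")
  case True
  have "ser_mult (ser_var q) g \<mu> = (\<lambda>p. ser_var q (fst p) * g (snd p)) (mon_var q, \<mu> - mon_var q)"
    unfolding ser_mult_eq_sum
  proof (rule sum_eq_single[OF finite_splittings])
    show "(mon_var q, \<mu> - mon_var q) \<in> splittings \<mu>"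
      unfolding splittings_def using single_add_minus[OF True] by simp
    show "\<forall>p\<in>splittings \<mu>. p \<noteq> (mon_var q, \<mu> - mon_var q) \<longrightarrow> ser_var q (fst p) * g (snd p) = 0"
      by (auto simp: splittings_def ser_var_def)
  qed
  thus ?thesis using True by (simp add: ser_var_def)
next
  case False
  have "\<forall>p\<in>splittings \<mu>. ser_var q (fst p) * g (snd p) = 0"
  proof
    fix p assume "p \<in> splittings \<mu>"
    hence "fst p + snd p = \<mu>" by (auto simp: splittings_def)
    hence "fst p \<noteq> mon_var q" using False by (metis le_add1 lookup_add lookup_single_if)
    thus "ser_var q (fst p) * g (snd p) = 0" by (simp add: ser_var_def)
  qed
  thus ?thesis using False unfolding ser_mult_eq_sum by (simp del: mult_eq_0_iff)
qed

lemma ser_mult_lincomb: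
  "ser_mult (\<lambda>m. a * f m + b * g m) h = (\<lambda>\<mu>. a * ser_mult f h \<mu> + b * ser_mult g h \<mu>)"
  by (rule ext) (simp add: ser_mult_eq_sum sum_distrib_left sum.distrib algebra_simps)

lemma ser_mult_diff: "ser_mult (\<lambda>m. f m - g m) h \<mu> = ser_mult f h \<mu> - ser_mult g h \<mu>"
  by (simp add: ser_mult_eq_sum sum_subtractf[symmetric] algebra_simps)

lemma ser_mult_lincomb_right:
  "ser_mult h (\<lambda>m. a * f m + b * g m) = (\<lambda>\<mu>. a * ser_mult h f \<mu> + b * ser_mult h g \<mu>)"
  using ser_mult_lincomb[of a f b g h] ser_mult_comm by metis

lemma sum_splittings_delta:
  "(\<Sum>p\<in>splittings \<mu>. if p = (a, b) then (1::complex) else 0) = (if \<mu> = a + b then 1 else 0)"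
  using finite_splittings by (auto simp: splittings_def)

lemma in_ideal_ser_mult:
  assumes "in_ideal i f" and "in_ideal j g"
  shows "in_ideal (i + j) (ser_mult f g)"
  unfolding in_ideal_def
proof (intro allI impI)
  fix \<mu> assume "ser_mult f g \<mu> \<noteq> 0"
  then obtain a b where "a + b = \<mu>" "f a \<noteq> 0" "g b \<noteq> 0" by (rule ser_mult_nonzeroD)
  with assms show "i + j \<le> gdeg \<mu>" unfolding in_ideal_def by (metis add_mono gdeg_add)
qed

lemma total_degree_ser_mult:
  assumes "\<forall>\<mu>. f \<mu> \<noteq> 0 \<longrightarrow> i \<le> total_degree \<mu>" and "\<forall>\<mu>. g \<mu> \<noteq> 0 \<longrightarrow> j \<le> total_degree \<mu>"
  shows "\<forall>\<mu>. ser_mult f g \<mu> \<noteq> 0 \<longrightarrow> i + j \<le> total_degree \<mu>"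
proof (intro allI impI)
  fix \<mu> assume "ser_mult f g \<mu> \<noteq> 0"
  then obtain a b where "a + b = \<mu>" "f a \<noteq> 0" "g b \<noteq> 0" by (rule ser_mult_nonzeroD)
  with assms show "i + j \<le> total_degree \<mu>" by (metis add_mono total_degree_add)
qed

lemma ser_mult_lowest:
  assumes f: "in_ideal (gdeg a) f" "\<forall>\<mu>. gdeg \<mu> = gdeg a \<longrightarrow> f \<mu> = (if \<mu> = a then 1 else 0)"
    and g: "in_ideal (gdeg b) g" "\<forall>\<mu>. gdeg \<mu> = gdeg b \<longrightarrow> g \<mu> = (if \<mu> = b then 1 else 0)"
    and \<mu>: "gdeg \<mu> = gdeg a + gdeg b"
  shows "ser_mult f g \<mu> = (if \<mu> = a + b then 1 else 0)"
proof -
  have "f (fst p) * g (snd p) = (if p = (a, b) then 1 else 0)" if p: "p \<in> splittings \<mu>" for p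
  proof (cases "f (fst p) \<noteq> 0 \<and> g (snd p) \<noteq> 0")
    case True
    have "gdeg a \<le> gdeg (fst p)" "gdeg b \<le> gdeg (snd p)"
      using f(1) g(1) True unfolding in_ideal_def by blast+
    moreover have "gdeg (fst p) + gdeg (snd p) = gdeg a + gdeg b"
      using p \<mu> by (auto simp: splittings_def)
    ultimately have "gdeg (fst p) = gdeg a" "gdeg (snd p) = gdeg b" by auto
    then show ?thesis using f(2) g(2) by (cases p) auto
  next
    case False
    then have "p \<noteq> (a, b)" using f(2) g(2) by auto
    then show ?thesis using False by auto
  qed
  then have "ser_mult f g \<mu> = (\<Sum>p\<in>splittings \<mu>. if p = (a, b) then 1 else 0)"
    unfolding ser_mult_eq_sum by (rule sum.cong[OF refl])
  then show ?thesis by (simp add: sum_splittings_delta)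
qed

lemma vx_pow_single: "vx_pow i (Poly_Mapping.single v11 k) = (of_int i gchoose k)"
  by (simp add: vx_pow_def lookup_single_if)

lemma ser_mult_vx_pow:
  assumes P: "\<forall>a. P a \<noteq> 0 \<longrightarrow> lookup a v11 = 0"
  shows "ser_mult P (vx_pow i) \<mu> = P (drop_v11 \<mu>) * (of_int i gchoose lookup \<mu> v11)"
proof -
  let ?p0 = "(drop_v11 \<mu>, Poly_Mapping.single v11 (lookup \<mu> v11))"
  have "ser_mult P (vx_pow i) \<mu> = (\<lambda>p. P (fst p) * vx_pow i (snd p)) ?p0"
    unfolding ser_mult_eq_sum
  proof (rule sum_eq_single[OF finite_splittings])
    show "?p0 \<in> splittings \<mu>" using drop_v11_add by (simp add: splittings_def)
    show "\<forall>p\<in>splittings \<mu>. p \<noteq> ?p0 \<longrightarrow> P (fst p) * vx_pow i (snd p) = 0"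
    proof (intro ballI impI)
      fix p assume p: "p \<in> splittings \<mu>" and ne: "p \<noteq> ?p0"
      obtain a b where ab: "p = (a, b)" by (cases p)
      have s: "a + b = \<mu>" using p ab by (simp add: splittings_def)
      show "P (fst p) * vx_pow i (snd p) = 0"
      proof (rule ccontr)
        assume nz: "P (fst p) * vx_pow i (snd p) \<noteq> 0"
        hence Pa: "P a \<noteq> 0" and vb: "vx_pow i b \<noteq> 0" using ab by auto
        have la: "lookup a v11 = 0" using P Pa by blast
        have kb: "keys b \<subseteq> {v11}" using vb by (simp add: vx_pow_def split: if_splits)
        have bl: "lookup b v11 = lookup \<mu> v11" using s la by auto
        have b: "b = Poly_Mapping.single v11 (lookup \<mu> v11)"
        proof (rule poly_mapping_eqI)
          fix y show "lookup b y = lookup (Poly_Mapping.single v11 (lookup \<mu> v11)) y"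
            using kb bl by (cases "y = v11") (auto simp: lookup_single_if in_keys_iff)
        qed
        have "a = drop_v11 \<mu>"
        proof (rule poly_mapping_eqI)
          fix y
          have "lookup \<mu> y = lookup a y + lookup b y" using s by auto
          thus "lookup a y = lookup (drop_v11 \<mu>) y"
            using b la by (cases "y = v11") (auto simp: drop_v11_def lookup_single_if)
        qed
        thus False using ne ab b by simp
      qed
    qed
  qed
  thus ?thesis using vx_pow_single[of i "lookup \<mu> v11"] by simp
qed

section \<open>Derivations\<close>

lemma ser_pd_apply: "ser_pd p g \<nu> = of_nat (lookup \<nu> p + 1) * g (\<nu> + mon_var p)"
  by (simp add: ser_pd_def)

lemma ser_pd_lincomb: "ser_pd p (\<lambda>\<nu>. a * f \<nu> + b * g \<nu>) = (\<lambda>\<mu>. a * ser_pd p f \<mu> + b * ser_pd p g \<mu>)"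
  by (rule ext) (simp add: ser_pd_apply algebra_simps)

lemma ser_pd_one: "ser_pd p ser_one = (\<lambda>_. 0)"
  by (rule ext) (simp add: ser_pd_apply ser_one_def)

lemma sum_splittings_shift:
  "(\<Sum>p\<in>splittings (\<mu> + mon_var x). of_nat (lookup (fst p) x) * (f (fst p) * g (snd p)))
   = (\<Sum>p\<in>splittings \<mu>. of_nat (lookup (fst p) x + 1) * f (fst p + mon_var x) * g (snd p))"
proof -
  let ?S = "{p\<in>splittings (\<mu> + mon_var x). 1 \<le> lookup (fst p) x}"
  have "(\<Sum>p\<in>splittings (\<mu> + mon_var x). of_nat (lookup (fst p) x) * (f (fst p) * g (snd p)))
      = (\<Sum>p\<in>?S. of_nat (lookup (fst p) x) * (f (fst p) * g (snd p)))"
    by (rule sum.mono_neutral_right)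
       (auto simp: finite_splittings, metis Suc_leI neq0_conv of_nat_0 mult_zero_left)
  also have "\<dots> = (\<Sum>p\<in>splittings \<mu>. of_nat (lookup (fst p) x + 1) * f (fst p + mon_var x) * g (snd p))"
  proof (rule sum.reindex_bij_witness[where j="\<lambda>p. (fst p - mon_var x, snd p)"
        and i="\<lambda>p. (fst p + mon_var x, snd p)"])
    fix p assume "p \<in> ?S"
    hence p: "fst p + snd p = \<mu> + mon_var x" "1 \<le> lookup (fst p) x" by (auto simp: splittings_def)
    show "(fst (fst p - mon_var x, snd p) + mon_var x, snd (fst p - mon_var x, snd p)) = p"
      using p by (simp add: minus_add_single)
    have "fst p - mon_var x + snd p + mon_var x = \<mu> + mon_var x"
      using p minus_add_single[OF p(2)] by (simp add: algebra_simps)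
    thus "(fst p - mon_var x, snd p) \<in> splittings \<mu>" by (simp add: splittings_def)
    show "of_nat (lookup (fst (fst p - mon_var x, snd p)) x + 1)
          * f (fst (fst p - mon_var x, snd p) + mon_var x) * g (snd (fst p - mon_var x, snd p))
        = of_nat (lookup (fst p) x) * (f (fst p) * g (snd p))"
      using p by (simp add: lookup_single_if mult.assoc)
  next
    fix p assume "p \<in> splittings \<mu>"
    thus "(fst (fst p + mon_var x, snd p) - mon_var x, snd (fst p + mon_var x, snd p)) = p" by simp
    show "(fst p + mon_var x, snd p) \<in> ?S"
      using \<open>p \<in> splittings \<mu>\<close> by (auto simp: splittings_def lookup_single_if algebra_simps)
  qed
  finally show ?thesis .
qed

lemma ser_pd_mult:
  "ser_pd x (ser_mult f g) \<mu> = ser_mult (ser_pd x f) g \<mu> + ser_mult f (ser_pd x g) \<mu>"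
proof -
  have "ser_pd x (ser_mult f g) \<mu>
      = (\<Sum>p\<in>splittings (\<mu> + mon_var x).
           of_nat (lookup (fst p) x + lookup (snd p) x) * (f (fst p) * g (snd p)))"
  proof -
    have "\<forall>p\<in>splittings (\<mu> + mon_var x). lookup (fst p) x + lookup (snd p) x = lookup \<mu> x + 1"
      by (auto simp: splittings_def lookup_single_if dest: arg_cong[where f="\<lambda>m. lookup m x"])
    thus ?thesis unfolding ser_pd_def ser_mult_eq_sum by (simp add: sum_distrib_left)
  qed
  also have "\<dots> = (\<Sum>p\<in>splittings (\<mu> + mon_var x). of_nat (lookup (fst p) x) * (f (fst p) * g (snd p)))
                 + (\<Sum>p\<in>splittings (\<mu> + mon_var x). of_nat (lookup (snd p) x) * (g (snd p) * f (fst p)))"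
    by (simp add: sum.distrib algebra_simps)
  also have "(\<Sum>p\<in>splittings (\<mu> + mon_var x). of_nat (lookup (snd p) x) * (g (snd p) * f (fst p)))
      = (\<Sum>p\<in>splittings (\<mu> + mon_var x). of_nat (lookup (fst p) x) * (g (fst p) * f (snd p)))"
    by (rule sum.reindex_bij_witness[where i=prod.swap and j=prod.swap])
       (auto simp: splittings_def add.commute)
  also have "\<dots> = (\<Sum>p\<in>splittings \<mu>. of_nat (lookup (fst p) x + 1) * g (fst p + mon_var x) * f (snd p))"
    by (rule sum_splittings_shift)
  also have "\<dots> = ser_mult f (ser_pd x g) \<mu>"
    unfolding ser_mult_comm[of f] ser_mult_eq_sum ser_pd_def by (simp add: algebra_simps)
  also have "(\<Sum>p\<in>splittings (\<mu> + mon_var x). of_nat (lookup (fst p) x) * (f (fst p) * g (snd p)))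
      = ser_mult (ser_pd x f) g \<mu>"
    unfolding sum_splittings_shift ser_mult_eq_sum ser_pd_def by (simp add: algebra_simps)
  finally show ?thesis by simp
qed

lemma total_degree_mult: "of_nat (total_degree \<mu>) * ser_mult f g \<mu>
   = ser_mult (\<lambda>m. of_nat (total_degree m) * f m) g \<mu> + ser_mult f (\<lambda>m. of_nat (total_degree m) * g m) \<mu>"
proof -
  have "\<forall>p\<in>splittings \<mu>. total_degree \<mu> = total_degree (fst p) + total_degree (snd p)"
    by (auto simp: splittings_def)
  thus ?thesis
    unfolding ser_mult_eq_sum by (simp add: sum_distrib_left sum.distrib[symmetric] algebra_simps)
qed

abbreviation pd10 :: "ser \<Rightarrow> ser" where "pd10 \<equiv> ser_pd (1, 0)"

text \<open>The operator \<open>D\<close>, written as \<open>\<partial>/\<partial>t\<^sup>1\<^sub>1\<close> minus the Euler operator.\<close>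

definition Dop :: "ser \<Rightarrow> ser" where
  "Dop g = (\<lambda>\<mu>. of_nat (lookup \<mu> v11 + 1) * g (\<mu> + mon_var v11) - of_nat (total_degree \<mu>) * g \<mu>)"

lemma Dop_eq_pd: "Dop g \<mu> = ser_pd v11 g \<mu> - of_nat (total_degree \<mu>) * g \<mu>"
  by (simp add: Dop_def ser_pd_def)

lemma Dop_lincomb: "Dop (\<lambda>\<nu>. a * f \<nu> + b * g \<nu>) \<mu> = a * Dop f \<mu> + b * Dop g \<mu>"
  by (simp add: Dop_def algebra_simps)

lemma Dop_one: "Dop ser_one = (\<lambda>_. 0)"
  by (rule ext) (auto simp: Dop_def ser_one_def)

lemma Dop_mult: "Dop (ser_mult f g) \<mu> = ser_mult (Dop f) g \<mu> + ser_mult f (Dop g) \<mu>"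
proof -
  have 1: "ser_mult (Dop f) g \<mu>
      = ser_mult (ser_pd v11 f) g \<mu> - ser_mult (\<lambda>m. of_nat (total_degree m) * f m) g \<mu>"
    unfolding Dop_eq_pd[abs_def] by (rule ser_mult_diff)
  have 2: "ser_mult f (Dop g) \<mu>
      = ser_mult f (ser_pd v11 g) \<mu> - ser_mult f (\<lambda>m. of_nat (total_degree m) * g m) \<mu>"
    using ser_mult_diff[of "ser_pd v11 g" "\<lambda>m. of_nat (total_degree m) * g m" f \<mu>] ser_mult_comm[of f]
    unfolding Dop_eq_pd[abs_def] by (metis (no_types, lifting))
  show ?thesis unfolding 1 2 Dop_eq_pd ser_pd_mult total_degree_mult by simp
qed

lemma Dop_pd10: "Dop (pd10 g) \<mu> = pd10 (Dop g) \<mu> + pd10 g \<mu>"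
proof -
  have c: "\<mu> + mon_var (1,0) + mon_var v11 = \<mu> + mon_var v11 + mon_var (1,0)" by (simp add: algebra_simps)
  have l1: "lookup (\<mu> + mon_var v11) (1,0) = lookup \<mu> (1,0)" "lookup (\<mu> + mon_var (1,0)) v11 = lookup \<mu> v11"
    by (auto simp: lookup_single_if)
  have t: "total_degree (\<mu> + mon_var (1,0)) = total_degree \<mu> + 1" by simp
  show ?thesis unfolding Dop_def ser_pd_apply c l1 t by (simp add: algebra_simps)
qed

lemma Dop_pd10_iter: "Dop v = (\<lambda>_. 0) \<Longrightarrow> Dop ((pd10 ^^ n) v) = (\<lambda>\<mu>. of_nat n * (pd10 ^^ n) v \<mu>)"
proof (induction n)
  case 0 thus ?case by simp
next
  case (Suc n)
  show ?case
  proof (rule ext)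
    fix \<mu>
    have "Dop ((pd10 ^^ Suc n) v) \<mu> = pd10 (Dop ((pd10 ^^ n) v)) \<mu> + pd10 ((pd10 ^^ n) v) \<mu>"
      by (simp only: funpow.simps comp_apply Dop_pd10)
    also have "\<dots> = of_nat (Suc n) * (pd10 ^^ Suc n) v \<mu>"
      unfolding Suc.IH[OF Suc.prems] by (simp add: ser_pd_apply algebra_simps)
    finally show "Dop ((pd10 ^^ Suc n) v) \<mu> = of_nat (Suc n) * (pd10 ^^ Suc n) v \<mu>" .
  qed
qed

lemma opD_eq_Dop: "valid N g \<Longrightarrow> opD N g = Dop g"
proof (rule ext)
  fix \<mu> assume v: "valid N g"
  have t: "ser_mult (ser_var p) (ser_pd p g) \<mu> = of_nat (lookup \<mu> p) * g \<mu>" for p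
  proof (cases "1 \<le> lookup \<mu> p")
    case True
    have "lookup (\<mu> - mon_var p) p + 1 = lookup \<mu> p" using True by simp
    thus ?thesis using True by (simp add: ser_mult_var ser_pd_apply)
  qed (simp add: ser_mult_var)
  have "fsum (\<lambda>p. ser_mult (ser_var p) (ser_pd p g) \<mu>) ({1..N} \<times> UNIV)
      = of_nat (total_degree \<mu>) * g \<mu>"
  proof (cases "g \<mu> = 0")
    case True
    thus ?thesis unfolding t by (simp add: fsum_def)
  next
    case False
    hence k: "keys \<mu> \<subseteq> {1..N} \<times> UNIV" using v unfolding valid_def by force
    have "fsum (\<lambda>p. of_nat (lookup \<mu> p) * g \<mu>) ({1..N} \<times> UNIV)
        = (\<Sum>p\<in>keys \<mu>. of_nat (lookup \<mu> p) * g \<mu>)"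
      by (rule fsum_eq_sum) (use k in \<open>auto simp: in_keys_iff\<close>)
    thus ?thesis unfolding t by (simp add: total_degree_def sum_distrib_right)
  qed
  thus "opD N g \<mu> = Dop g \<mu>" by (simp add: opD_def Dop_eq_pd)
qed

section \<open>Unitriangular substitutions\<close>

lemma msubst_conv_prod: "msubst W m = ser_mult_monoid.set.F (\<lambda>x. ser_pow (W x) (lookup m x)) (keys m)"
proof -
  have "msubst W m
      = foldr ser_mult (map (\<lambda>x. ser_pow (W x) (lookup m x)) (sorted_list_of_set (keys m))) ser_one"
    unfolding msubst_def foldr_map by (simp add: o_def)
  also have "\<dots> = ser_mult_monoid.list.F (map (\<lambda>x. ser_pow (W x) (lookup m x)) (sorted_list_of_set (keys m)))"
    by (simp add: ser_mult_monoid.list.eq_foldr)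
  also have "\<dots> = ser_mult_monoid.set.F (\<lambda>x. ser_pow (W x) (lookup m x)) (set (sorted_list_of_set (keys m)))"
    by (rule ser_mult_monoid.distinct_set_conv_list[symmetric]) simp
  finally show ?thesis by simp
qed

lemma msubst_conv_prod_superset:
  "finite K \<Longrightarrow> keys m \<subseteq> K \<Longrightarrow> msubst W m = ser_mult_monoid.set.F (\<lambda>x. ser_pow (W x) (lookup m x)) K"
  unfolding msubst_conv_prod by (rule ser_mult_monoid.set.mono_neutral_left) (auto simp: in_keys_iff)

lemma msubst_0: "msubst W 0 = ser_one"
  by (simp add: msubst_conv_prod)

lemma msubst_add_mon_var: "msubst W (m + mon_var x) = ser_mult (W x) (msubst W m)"
proof -
  define g where "g n = (\<lambda>y. ser_pow (W y) (lookup n y))" for n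
  let ?K = "insert x (keys m)" and ?F = "ser_mult_monoid.set.F"
  have K: "finite ?K" "keys (m + mon_var x) \<subseteq> ?K" "keys m \<subseteq> ?K"
    using keys_add[of m "mon_var x"] by auto
  have rest: "?F (g (m + mon_var x)) (?K - {x}) = ?F (g m) (?K - {x})"
    by (rule ser_mult_monoid.set.cong) (auto simp: g_def lookup_single_if)
  have msubst_m: "msubst W m = ?F (g m) ?K"
    unfolding g_def by (rule msubst_conv_prod_superset[OF K(1,3)])
  have "msubst W (m + mon_var x) = ?F (g (m + mon_var x)) ?K"
    unfolding g_def by (rule msubst_conv_prod_superset[OF K(1,2)])
  also have "\<dots> = ser_mult (g (m + mon_var x) x) (?F (g (m + mon_var x)) (?K - {x}))"
    by (rule ser_mult_monoid.set.remove[OF K(1) insertI1])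
  also have "\<dots> = ser_mult (W x) (ser_mult (g m x) (?F (g m) (?K - {x})))"
    unfolding rest by (simp add: g_def lookup_single_if ser_mult_assoc)
  also have "\<dots> = ser_mult (W x) (msubst W m)"
    unfolding msubst_m by (simp add: ser_mult_monoid.set.remove[OF K(1) insertI1])
  finally show ?thesis .
qed

definition unitriangular :: "nat \<Rightarrow> (nat \<times> nat \<Rightarrow> ser) \<Rightarrow> bool" where
  "unitriangular N W \<longleftrightarrow> (\<forall>x. fst x \<in> {1..N} \<longrightarrow> in_ideal (snd x) (W x)
      \<and> (\<forall>\<mu>. gdeg \<mu> = snd x \<longrightarrow> W x \<mu> = (if \<mu> = mon_var x then 1 else 0))
      \<and> (\<forall>\<mu>. W x \<mu> \<noteq> 0 \<longrightarrow> 1 \<le> total_degree \<mu>))"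

lemma unitriangularD:
  assumes "unitriangular N W" and "fst x \<in> {1..N}"
  shows "in_ideal (gdeg (mon_var x)) (W x)"
    and "\<forall>\<mu>. gdeg \<mu> = gdeg (mon_var x) \<longrightarrow> W x \<mu> = (if \<mu> = mon_var x then 1 else 0)"
    and "\<forall>\<mu>. W x \<mu> \<noteq> 0 \<longrightarrow> total_degree (mon_var x) \<le> total_degree \<mu>"
proof -
  have "in_ideal (snd x) (W x) \<and> (\<forall>\<mu>. gdeg \<mu> = snd x \<longrightarrow> W x \<mu> = (if \<mu> = mon_var x then 1 else 0))
      \<and> (\<forall>\<mu>. W x \<mu> \<noteq> 0 \<longrightarrow> 1 \<le> total_degree \<mu>)"
    using assms unfolding unitriangular_def by blast
  then show "in_ideal (gdeg (mon_var x)) (W x)"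
    and "\<forall>\<mu>. gdeg \<mu> = gdeg (mon_var x) \<longrightarrow> W x \<mu> = (if \<mu> = mon_var x then 1 else 0)"
    and "\<forall>\<mu>. W x \<mu> \<noteq> 0 \<longrightarrow> total_degree (mon_var x) \<le> total_degree \<mu>"
    by simp_all
qed

lemma msubst_in_ideal:
  assumes W: "unitriangular N W"
  shows "valid_mon N m \<Longrightarrow> in_ideal (gdeg m) (msubst W m)"
proof (induction m rule: mon_induct)
  case zero
  show ?case by (simp add: msubst_0 in_ideal_def)
next
  case (add_var m x)
  with valid_mon_add_mon_var have "valid_mon N m" "fst x \<in> {1..N}" by blast+
  then show ?case
    using in_ideal_ser_mult[OF unitriangularD(1)[OF W] add_var.IH]
    unfolding msubst_add_mon_var by (simp add: add.commute)
qed

lemma msubst_lowest: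
  assumes W: "unitriangular N W"
  shows "valid_mon N m \<Longrightarrow> gdeg \<mu> = gdeg m \<Longrightarrow> msubst W m \<mu> = (if \<mu> = m then 1 else 0)"
proof (induction m arbitrary: \<mu> rule: mon_induct)
  case zero
  then show ?case by (simp add: msubst_0 ser_one_def gdeg_eq_0_iff)
next
  case (add_var m x)
  with valid_mon_add_mon_var have m: "valid_mon N m" and x: "fst x \<in> {1..N}" by blast+
  have "ser_mult (W x) (msubst W m) \<mu> = (if \<mu> = mon_var x + m then 1 else 0)"
    using W x add_var.prems(2) add_var.IH[OF m]
    by (intro ser_mult_lowest unitriangularD msubst_in_ideal[OF W m]) (auto simp: add.commute)
  then show ?case unfolding msubst_add_mon_var by (simp add: add.commute)
qed

lemma msubst_total_degree:
  assumes W: "unitriangular N W"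
  shows "valid_mon N m \<Longrightarrow> msubst W m \<mu> \<noteq> 0 \<Longrightarrow> total_degree m \<le> total_degree \<mu>"
proof (induction m arbitrary: \<mu> rule: mon_induct)
  case zero
  then show ?case by simp
next
  case (add_var m x)
  with valid_mon_add_mon_var have "valid_mon N m" "fst x \<in> {1..N}" by blast+
  then show ?case
    using total_degree_ser_mult[OF unitriangularD(3)[OF W] allI[OF impI[OF add_var.IH]]] add_var.prems(2)
    unfolding msubst_add_mon_var by (simp add: add.commute)
qed

definition subst_ser :: "(nat \<times> nat \<Rightarrow> ser) \<Rightarrow> ser \<Rightarrow> ser" where
  "subst_ser W F = (\<lambda>\<mu>. fsum (\<lambda>m. F m * msubst W m \<mu>) UNIV)"

lemma Phi_eq_subst_ser: "Phi vt = subst_ser (wt vt)"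
  by (rule ext) (simp add: Phi_def subst_ser_def)

definition subst_support :: "nat \<Rightarrow> mon \<Rightarrow> mon set" where
  "subst_support N \<mu> = {m. keys m \<subseteq> {1..N} \<times> {..gdeg \<mu>} \<and> (\<forall>x. lookup m x \<le> total_degree \<mu>)}"

lemma finite_subst_support: "finite (subst_support N \<mu>)"
  unfolding subst_support_def by (rule finite_bounded_mons) auto

lemma subst_support_mem:
  assumes W: "unitriangular N W" and v: "valid_mon N m" and nz: "msubst W m \<mu> \<noteq> 0"
  shows "m \<in> subst_support N \<mu>"
proof -
  have g: "gdeg m \<le> gdeg \<mu>" using msubst_in_ideal[OF W v] nz unfolding in_ideal_def by blast
  have t: "total_degree m \<le> total_degree \<mu>" by (rule msubst_total_degree[OF W v nz])
  have "keys m \<subseteq> {1..N} \<times> {..gdeg \<mu>}"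
  proof
    fix x assume x: "x \<in> keys m"
    hence "fst x \<in> {1..N}" using v unfolding valid_mon_def by auto
    moreover have "snd x \<le> gdeg \<mu>" using snd_le_gdeg[OF x] g by simp
    ultimately show "x \<in> {1..N} \<times> {..gdeg \<mu>}" by (cases x) auto
  qed
  moreover have "\<forall>x. lookup m x \<le> total_degree \<mu>" using lookup_le_total_degree t order.trans by blast
  ultimately show ?thesis unfolding subst_support_def by blast
qed

lemma subst_ser_eq_sum:
  assumes W: "unitriangular N W" and F: "valid N F" and B: "finite B" "subst_support N \<mu> \<subseteq> B"
  shows "subst_ser W F \<mu> = (\<Sum>m\<in>B. F m * msubst W m \<mu>)"
  unfolding subst_ser_def
proof (rule fsum_eq_sum[OF B(1)])
  show "\<forall>i\<in>UNIV - B. F i * msubst W i \<mu> = 0"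
    using subst_support_mem[OF W valid_imp_valid_mon[OF F]] B(2) by fastforce
qed auto

lemma subst_ser_lincomb:
  assumes W: "unitriangular N W" and F1: "valid N F1" and F2: "valid N F2"
  shows "subst_ser W (\<lambda>m. a * F1 m + b * F2 m) \<mu> = a * subst_ser W F1 \<mu> + b * subst_ser W F2 \<mu>"
proof -
  have v: "valid N (\<lambda>m. a * F1 m + b * F2 m)"
    using F1 F2 unfolding valid_def
    by (metis (no_types, lifting) add.right_neutral mult_zero_right)
  show ?thesis
    unfolding subst_ser_eq_sum[OF W v finite_subst_support order.refl]
      subst_ser_eq_sum[OF W F1 finite_subst_support order.refl]
      subst_ser_eq_sum[OF W F2 finite_subst_support order.refl]
    by (simp add: sum_distrib_left sum.distrib algebra_simps)
qed

lemma subst_ser_lowest: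
  assumes W: "unitriangular N W" and G: "valid N G" and low: "in_ideal g G" and \<mu>: "gdeg \<mu> \<le> g"
  shows "subst_ser W G \<mu> = (if gdeg \<mu> = g then G \<mu> else 0)"
proof -
  have lowest: "G m * msubst W m \<mu> = (if m = \<mu> then G m else 0)" if "G m \<noteq> 0" for m
  proof -
    have m: "valid_mon N m" using valid_imp_valid_mon[OF G that] .
    have "g \<le> gdeg m" using low that unfolding in_ideal_def by blast
    then have "gdeg m \<le> gdeg \<mu> \<Longrightarrow> gdeg \<mu> = gdeg m" using \<mu> by linarith
    then show ?thesis
      using msubst_in_ideal[OF W m] msubst_lowest[OF W m] unfolding in_ideal_def by fastforce
  qed
  have "subst_ser W G \<mu> = (\<Sum>m\<in>insert \<mu> (subst_support N \<mu>). G m * msubst W m \<mu>)"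
    by (rule subst_ser_eq_sum[OF W G]) (auto simp: finite_subst_support)
  also have "\<dots> = G \<mu> * msubst W \<mu> \<mu>"
    by (rule sum_eq_single) (auto simp: finite_subst_support, metis lowest mult_eq_0_iff)
  also have "\<dots> = (if gdeg \<mu> = g then G \<mu> else 0)"
    using lowest[of \<mu>] low \<mu> unfolding in_ideal_def by (cases "G \<mu> = 0") auto
  finally show ?thesis .
qed

lemma in_ideal_subst_serD:
  assumes W: "unitriangular N W" and F: "valid N F" and f: "in_ideal k (subst_ser W F)"
  shows "in_ideal k F"
proof -
  have "in_ideal g F" if "g \<le> k" for g
    using that
  proof (induction g)
    case 0
    show ?case by (simp add: in_ideal_def)
  next
    case (Suc g)
    then have low: "in_ideal g F" by simp
    have "F m = 0" if "gdeg m = g" for m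
    proof -
      have "subst_ser W F m = F m" using subst_ser_lowest[OF W F low, of m] that by simp
      moreover have "subst_ser W F m = 0" using f that Suc.prems unfolding in_ideal_def by fastforce
      ultimately show ?thesis by simp
    qed
    then show ?case
      using low unfolding in_ideal_def by (metis Suc_leI le_neq_implies_less)
  qed
  then show ?thesis by simp
qed

lemma subst_ser_eq_zeroD:
  assumes W: "unitriangular N W" and G: "valid N G" and z: "\<forall>\<mu>. subst_ser W G \<mu> = 0"
  shows "G m = 0"
proof -
  have "in_ideal (Suc (gdeg m)) (subst_ser W G)" using z by (simp add: in_ideal_def)
  from in_ideal_subst_serD[OF W G this] show "G m = 0" unfolding in_ideal_def by fastforce
qed

definition Dop_graded :: "nat \<Rightarrow> (nat \<times> nat \<Rightarrow> ser) \<Rightarrow> bool" where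
  "Dop_graded N W \<longleftrightarrow> (\<forall>x. fst x \<in> {1..N} \<longrightarrow>
      Dop (W x) = (\<lambda>\<mu>. of_nat (snd x) * W x \<mu> + (if x = v11 then ser_one \<mu> else 0)))"

lemma Dop_msubst:
  assumes W: "Dop_graded N W"
  shows "valid_mon N m \<Longrightarrow> Dop (msubst W m) \<mu>
           = of_nat (gdeg m) * msubst W m \<mu> + of_nat (lookup m v11) * msubst W (m - mon_var v11) \<mu>"
proof (induction m arbitrary: \<mu> rule: mon_induct)
  case zero
  show ?case by (simp add: msubst_0 Dop_one)
next
  case (add_var m x)
  with valid_mon_add_mon_var have m: "valid_mon N m" and x: "fst x \<in> {1..N}" by blast+
  let ?M = "msubst W m" and ?M' = "msubst W (m - mon_var v11)"
  have "Dop (W x) = (\<lambda>\<mu>. of_nat (snd x) * W x \<mu> + (if x = v11 then ser_one \<mu> else 0))"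
    using W x unfolding Dop_graded_def by blast
  then have Wx: "Dop (W x) = (\<lambda>\<mu>. of_nat (snd x) * W x \<mu> + (if x = v11 then 1 else 0) * ser_one \<mu>)"
    by (auto simp: fun_eq_iff)
  have IH: "Dop ?M = (\<lambda>\<mu>. of_nat (gdeg m) * ?M \<mu> + of_nat (lookup m v11) * ?M' \<mu>)"
    using add_var.IH[OF m] by (simp add: fun_eq_iff)
  have cancel: "m + mon_var v11 - mon_var v11 = m"
    by (rule poly_mapping_eqI) (simp add: lookup_single_if)
  have swap: "lookup m v11 \<noteq> 0 \<Longrightarrow> m - mon_var v11 + mon_var x = m + mon_var x - mon_var v11"
    by (rule poly_mapping_eqI) (auto simp: lookup_single_if)
  have "Dop (msubst W (m + mon_var x)) \<mu> = ser_mult (Dop (W x)) ?M \<mu> + ser_mult (W x) (Dop ?M) \<mu>"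
    unfolding msubst_add_mon_var by (rule Dop_mult)
  also have "\<dots> = of_nat (snd x + gdeg m) * ser_mult (W x) ?M \<mu> + (if x = v11 then ?M \<mu> else 0)
      + of_nat (lookup m v11) * ser_mult (W x) ?M' \<mu>"
    unfolding Wx IH ser_mult_lincomb ser_mult_lincomb_right by (simp add: ser_mult_one algebra_simps)
  also have "\<dots> = of_nat (gdeg (m + mon_var x)) * msubst W (m + mon_var x) \<mu>
      + of_nat (lookup (m + mon_var x) v11) * msubst W (m + mon_var x - mon_var v11) \<mu>"
    unfolding msubst_add_mon_var[symmetric] using swap cancel
    by (cases "x = v11"; cases "lookup m v11 = 0") (auto simp: lookup_single_if algebra_simps)
  finally show ?case .
qed

definition Dop_coeff :: "ser \<Rightarrow> ser" where
  "Dop_coeff F = (\<lambda>m. of_nat (gdeg m) * F m + of_nat (lookup m v11 + 1) * F (m + mon_var v11))"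

lemma valid_Dop_coeff: "valid N F \<Longrightarrow> valid N (Dop_coeff F)"
  unfolding valid_def Dop_coeff_def
proof (intro allI impI)
  fix m assume "of_nat (gdeg m) * F m + of_nat (lookup m v11 + 1) * F (m + mon_var v11) \<noteq> 0"
  hence "F m \<noteq> 0 \<or> F (m + mon_var v11) \<noteq> 0" by auto
  moreover assume "\<forall>m. F m \<noteq> 0 \<longrightarrow> fst ` keys m \<subseteq> {1..N}"
  ultimately show "fst ` keys m \<subseteq> {1..N}" using keys_subset_add_mon_var[of m v11] by blast
qed

lemma sum_msubst_shift:
  assumes W: "unitriangular N W" and F: "valid N F"
    and B: "finite B" "(\<lambda>m. m + mon_var x) ` subst_support N \<mu> \<subseteq> B"
  shows "(\<Sum>m\<in>B. F m * of_nat (lookup m x) * msubst W (m - mon_var x) \<mu>)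
       = (\<Sum>m\<in>subst_support N \<mu>. F (m + mon_var x) * of_nat (lookup m x + 1) * msubst W m \<mu>)"
proof -
  let ?A = "subst_support N \<mu>" and ?e = "\<lambda>m. m + mon_var x"
  have "(\<Sum>m\<in>B. F m * of_nat (lookup m x) * msubst W (m - mon_var x) \<mu>)
      = (\<Sum>m\<in>?e ` ?A. F m * of_nat (lookup m x) * msubst W (m - mon_var x) \<mu>)"
  proof (rule sum.mono_neutral_right[OF B(1) B(2)], rule ballI, rule ccontr)
    fix m assume m: "m \<in> B - ?e ` ?A" and nz: "F m * of_nat (lookup m x) * msubst W (m - mon_var x) \<mu> \<noteq> 0"
    then have Fm: "F m \<noteq> 0" and l: "lookup m x \<noteq> 0" and M: "msubst W (m - mon_var x) \<mu> \<noteq> 0" by auto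
    have "valid_mon N (m - mon_var x)"
      using valid_imp_valid_mon[OF F Fm] keys_minus_mon_var_subset[of m x]
      unfolding valid_mon_def by (meson image_mono order.trans)
    then have "m - mon_var x \<in> ?A" by (rule subst_support_mem[OF W _ M])
    moreover have "m = ?e (m - mon_var x)" using l minus_add_single[of 1 m x] by simp
    ultimately show False using m by blast
  qed
  also have "\<dots> = (\<Sum>m\<in>?A. F (m + mon_var x) * of_nat (lookup m x + 1) * msubst W m \<mu>)"
    by (subst sum.reindex) (auto simp: inj_on_def lookup_single_if)
  finally show ?thesis .
qed

lemma Dop_subst_ser:
  assumes W: "unitriangular N W" and WD: "Dop_graded N W" and F: "valid N F"
  shows "Dop (subst_ser W F) \<mu> = subst_ser W (Dop_coeff F) \<mu>"
proof -
  let ?A = "subst_support N \<mu>" and ?e = "\<lambda>m. m + mon_var v11"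
  define B where "B = subst_support N (\<mu> + mon_var v11) \<union> ?A \<union> ?e ` ?A"
  have B: "finite B" "?A \<subseteq> B" "?e ` ?A \<subseteq> B" "subst_support N (\<mu> + mon_var v11) \<subseteq> B"
    unfolding B_def by (auto simp: finite_subst_support)
  have Dop_term: "F m * Dop (msubst W m) \<mu>
      = of_nat (gdeg m) * F m * msubst W m \<mu>
        + F m * of_nat (lookup m v11) * msubst W (m - mon_var v11) \<mu>" for m
    by (cases "F m = 0") (simp_all add: Dop_msubst[OF WD valid_imp_valid_mon[OF F]] algebra_simps)
  have "Dop (subst_ser W F) \<mu> = (\<Sum>m\<in>B. F m * Dop (msubst W m) \<mu>)"
    unfolding Dop_def subst_ser_eq_sum[OF W F B(1) B(2)] subst_ser_eq_sum[OF W F B(1) B(4)]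
    by (simp add: sum_distrib_left sum_subtractf algebra_simps)
  also have "\<dots> = (\<Sum>m\<in>B. of_nat (gdeg m) * F m * msubst W m \<mu>)
                 + (\<Sum>m\<in>B. F m * of_nat (lookup m v11) * msubst W (m - mon_var v11) \<mu>)"
    unfolding Dop_term by (rule sum.distrib)
  also have "\<dots> = (\<Sum>m\<in>?A. of_nat (gdeg m) * F m * msubst W m \<mu>)
                 + (\<Sum>m\<in>?A. F (m + mon_var v11) * of_nat (lookup m v11 + 1) * msubst W m \<mu>)"
    using subst_ser_eq_sum[OF W valid_scale[OF F] B(1) B(2)]
      subst_ser_eq_sum[OF W valid_scale[OF F] finite_subst_support order.refl]
      sum_msubst_shift[OF W F B(1) B(3)]
    by simp
  also have "\<dots> = subst_ser W (Dop_coeff F) \<mu>"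
    unfolding subst_ser_eq_sum[OF W valid_Dop_coeff[OF F] finite_subst_support order.refl]
    by (simp add: Dop_coeff_def sum.distrib algebra_simps)
  finally show ?thesis .
qed

lemma Dop_coeff_eigen:
  assumes W: "unitriangular N W" "Dop_graded N W" and F: "valid N F"
    and eigen: "Dop (subst_ser W F) = (\<lambda>\<mu>. c * subst_ser W F \<mu>)"
  shows "Dop_coeff F = (\<lambda>m. c * F m)"
proof
  fix m
  let ?G = "\<lambda>m. 1 * Dop_coeff F m + (- c) * F m"
  have G: "valid N ?G"
    using valid_Dop_coeff[OF F] F unfolding valid_def
    by (metis (no_types, lifting) add.right_neutral mult_zero_right)
  have "subst_ser W ?G \<mu> = 0" for \<mu>
    using subst_ser_lincomb[OF W(1) valid_Dop_coeff[OF F] F, of 1 "- c" \<mu>]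
      Dop_subst_ser[OF W F, of \<mu>] eigen by (simp add: fun_eq_iff)
  then have "?G m = 0" by (intro subst_ser_eq_zeroD[OF W(1) G]) blast
  then show "Dop_coeff F m = c * F m" by simp
qed

section \<open>Eigenseries of \<open>D\<close>\<close>

definition v11_binomial :: "int \<Rightarrow> ser \<Rightarrow> bool" where
  "v11_binomial d F \<longleftrightarrow>
    (\<forall>\<mu>. F \<mu> = ((of_int d - of_nat (gdeg (drop_v11 \<mu>))) gchoose lookup \<mu> v11) * F (drop_v11 \<mu>))"

lemma Dop_coeff_eigen_imp_v11_binomial:
  assumes eigen: "Dop_coeff F = (\<lambda>m. of_int d * F m)"
  shows "v11_binomial d F"
proof -
  have rec: "of_nat (lookup m v11 + 1) * F (m + mon_var v11) = (of_int d - of_nat (gdeg m)) * F m" for m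
    using fun_cong[OF eigen, of m] unfolding Dop_coeff_def by (simp add: algebra_simps)
  have power: "F (m + Poly_Mapping.single v11 j) = ((of_int d - of_nat (gdeg m)) gchoose j) * F m"
    if m: "lookup m v11 = 0" for m j
  proof (induction j)
    case (Suc j)
    let ?a = "of_int d - of_nat (gdeg m) :: complex"
    let ?m = "m + Poly_Mapping.single v11 j"
    have shift: "m + Poly_Mapping.single v11 (Suc j) = ?m + mon_var v11"
      by (rule poly_mapping_eqI) (simp add: lookup_single_if)
    have "of_nat (Suc j) * F (?m + mon_var v11) = (?a - of_nat j) * F ?m"
      using rec[of ?m] m by (simp add: lookup_single_if)
    also have "\<dots> = of_nat (Suc j) * ((?a gchoose Suc j) * F m)"
      unfolding Suc.IH using gbinomial_mult_1[of ?a j] by (simp add: algebra_simps)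
    finally have "of_nat (Suc j) * F (?m + mon_var v11) = of_nat (Suc j) * ((?a gchoose Suc j) * F m)" .
    then show ?case
      unfolding shift by (metis mult_cancel_left of_nat_eq_0_iff nat.distinct(1))
  qed simp
  show ?thesis
    unfolding v11_binomial_def
  proof
    fix \<mu>
    have "F \<mu> = F (drop_v11 \<mu> + Poly_Mapping.single v11 (lookup \<mu> v11))" by (simp only: drop_v11_add)
    also have "\<dots> = ((of_int d - of_nat (gdeg (drop_v11 \<mu>))) gchoose lookup \<mu> v11) * F (drop_v11 \<mu>)"
      by (rule power[OF lookup_drop_v11])
    finally show "F \<mu> = ((of_int d - of_nat (gdeg (drop_v11 \<mu>))) gchoose lookup \<mu> v11) * F (drop_v11 \<mu>)" .
  qed
qed

lemma v11_binomial_vanishes_below: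
  assumes "v11_binomial d F" and "in_ideal k F" and "gdeg (drop_v11 \<mu>) < k"
  shows "F \<mu> = 0"
proof -
  have "F (drop_v11 \<mu>) = 0" using assms(2,3) leD unfolding in_ideal_def by blast
  then show ?thesis using assms(1) unfolding v11_binomial_def by (metis mult_zero_right)
qed

text \<open>The series \<open>P\<^sub>i\<close> of the expansion: \<open>v11_free_part (d - i) F\<close> in part (1),
  \<open>v11_free_part i F\<close> in part (2).\<close>

definition v11_free_part :: "int \<Rightarrow> ser \<Rightarrow> ser" where
  "v11_free_part e F = (\<lambda>m. if int (gdeg m) = e \<and> lookup m v11 = 0 then F m else 0)"

lemma Av_deg_v11_free_part: "valid N F \<Longrightarrow> Av_deg N e (v11_free_part e F)"
  unfolding Av_deg_def valid_def v11_free_part_def by auto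

lemma ser_pd_v11_free_part: "ser_pd v11 (v11_free_part e F) = ser_zero"
  by (rule ext) (simp add: ser_pd_apply v11_free_part_def ser_zero_def lookup_single_if)

lemma ser_mult_v11_free_part_vx_pow:
  "ser_mult (v11_free_part e F) (vx_pow i) \<mu>
     = (if int (gdeg (drop_v11 \<mu>)) = e then F (drop_v11 \<mu>) * (of_int i gchoose lookup \<mu> v11) else 0)"
proof -
  have "ser_mult (v11_free_part e F) (vx_pow i) \<mu>
      = v11_free_part e F (drop_v11 \<mu>) * (of_int i gchoose lookup \<mu> v11)"
    by (rule ser_mult_vx_pow) (simp add: v11_free_part_def)
  then show ?thesis using lookup_drop_v11[of \<mu>] by (simp add: v11_free_part_def)
qed

lemma Art_if_v11_binomial:
  assumes F: "valid N F" and binom: "v11_binomial d F"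
  shows "Art N d F"
  unfolding Art_def
proof (intro exI conjI)
  show "\<forall>i\<le>d. Av_deg N (d - i) (v11_free_part (d - i) F) \<and> ser_pd v11 (v11_free_part (d - i) F) = ser_zero"
    using Av_deg_v11_free_part[OF F] ser_pd_v11_free_part by blast
  show "F = (\<lambda>\<mu>. fsum (\<lambda>i. ser_mult (v11_free_part (d - i) F) (vx_pow i) \<mu>) {..d})"
  proof
    fix \<mu>
    let ?i = "d - int (gdeg (drop_v11 \<mu>))"
    have "fsum (\<lambda>i. ser_mult (v11_free_part (d - i) F) (vx_pow i) \<mu>) {..d}
        = ser_mult (v11_free_part (d - ?i) F) (vx_pow ?i) \<mu>"
      by (rule fsum_single) (auto simp: ser_mult_v11_free_part_vx_pow)
    also have "\<dots> = F \<mu>"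
      using binom[unfolded v11_binomial_def, rule_format, of \<mu>]
      by (simp add: ser_mult_v11_free_part_vx_pow mult.commute)
    finally show "F \<mu> = fsum (\<lambda>i. ser_mult (v11_free_part (d - i) F) (vx_pow i) \<mu>) {..d}" by simp
  qed
qed

lemma v11_binomial_expansion:
  assumes binom: "v11_binomial d F" and low: "in_ideal k F"
  shows "F = (\<lambda>\<mu>. fsum (\<lambda>i. ser_mult (v11_free_part (int i) F) (vx_pow (d - int i)) \<mu>) {k..})"
proof
  fix \<mu>
  let ?i = "gdeg (drop_v11 \<mu>)"
  show "F \<mu> = fsum (\<lambda>i. ser_mult (v11_free_part (int i) F) (vx_pow (d - int i)) \<mu>) {k..}"
  proof (cases "k \<le> ?i")
    case True
    have "fsum (\<lambda>i. ser_mult (v11_free_part (int i) F) (vx_pow (d - int i)) \<mu>) {k..}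
        = ser_mult (v11_free_part (int ?i) F) (vx_pow (d - int ?i)) \<mu>"
      by (rule fsum_single) (use True in \<open>auto simp: ser_mult_v11_free_part_vx_pow\<close>)
    also have "\<dots> = F \<mu>"
      using binom[unfolded v11_binomial_def, rule_format, of \<mu>]
      by (simp add: ser_mult_v11_free_part_vx_pow mult.commute)
    finally show ?thesis by simp
  next
    case False
    then show ?thesis
      using v11_binomial_vanishes_below[OF binom low, of \<mu>]
      by (simp add: fsum_zero ser_mult_v11_free_part_vx_pow)
  qed
qed

lemma v11_free_part_lowest:
  assumes binom: "v11_binomial d F" and low: "in_ideal k F"
  shows "v11_free_part (int k) F = (\<lambda>m. if gdeg m = k then F m else 0)"
proof
  fix m
  show "v11_free_part (int k) F m = (if gdeg m = k then F m else 0)"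
  proof (cases "gdeg m = k \<and> lookup m v11 \<noteq> 0")
    case True
    then have "gdeg (drop_v11 m) < k" using gdeg_drop_v11[of m] by simp
    then show ?thesis using True v11_binomial_vanishes_below[OF binom low] by (simp add: v11_free_part_def)
  qed (auto simp: v11_free_part_def)
qed

lemma homog_expansion_lowest:
  assumes "\<forall>i\<ge>k. homog i (h i)" and "f = (\<lambda>m. fsum (\<lambda>i. h i m) {k..})"
  shows "h k = (\<lambda>m. if gdeg m = k then f m else 0)"
proof
  fix m
  show "h k m = (if gdeg m = k then f m else 0)"
  proof (cases "gdeg m = k")
    case True
    have "fsum (\<lambda>i. h i m) {k..} = h k m"
      by (rule fsum_single) (use assms True in \<open>auto simp: homog_def\<close>)
    then show ?thesis using True assms(2) by simp
  qed (use assms in \<open>auto simp: homog_def\<close>)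
qed

section \<open>The shift part of \<open>S\<close>\<close>

definition shift_op :: "nat \<Rightarrow> ser \<Rightarrow> ser" where
  "shift_op N g = (\<lambda>\<mu>. fsum (\<lambda>p. ser_mult (ser_var (fst p, Suc (snd p))) (ser_pd p g) \<mu>) ({1..N} \<times> UNIV))"

lemma opS_eq_shift_op: "opS N g \<mu> = pd10 g \<mu> - shift_op N g \<mu>"
  by (simp add: opS_def shift_op_def)

abbreviation succ_var :: "nat \<times> nat \<Rightarrow> nat \<times> nat" where "succ_var p \<equiv> (fst p, Suc (snd p))"

definition shift_support :: "nat \<Rightarrow> mon \<Rightarrow> (nat \<times> nat) set" where
  "shift_support N \<mu> = {p. fst p \<in> {1..N} \<and> succ_var p \<in> keys \<mu>}"

lemma finite_shift_support: "finite (shift_support N \<mu>)"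
proof -
  have "shift_support N \<mu> \<subseteq> (\<lambda>y. (fst y, snd y - 1)) ` keys \<mu>"
  proof
    fix p assume "p \<in> shift_support N \<mu>"
    hence "succ_var p \<in> keys \<mu>" by (simp add: shift_support_def)
    moreover have "p = (\<lambda>y. (fst y, snd y - 1)) (succ_var p)" by simp
    ultimately show "p \<in> (\<lambda>y. (fst y, snd y - 1)) ` keys \<mu>" by (rule image_eqI[rotated])
  qed
  thus ?thesis by (rule finite_subset) simp
qed

lemma shift_op_eq_sum: "shift_op N g \<mu> = (\<Sum>p\<in>shift_support N \<mu>. ser_pd p g (\<mu> - mon_var (succ_var p)))"
proof -
  have "shift_op N g \<mu> = (\<Sum>p\<in>shift_support N \<mu>. ser_mult (ser_var (succ_var p)) (ser_pd p g) \<mu>)"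
    unfolding shift_op_def
  proof (rule fsum_eq_sum[OF finite_shift_support])
    show "shift_support N \<mu> \<subseteq> {1..N} \<times> UNIV" by (auto simp: shift_support_def)
    show "\<forall>i\<in>{1..N} \<times> UNIV - shift_support N \<mu>. ser_mult (ser_var (succ_var i)) (ser_pd i g) \<mu> = 0"
      by (auto simp: shift_support_def ser_mult_var in_keys_iff)
  qed
  also have "\<dots> = (\<Sum>p\<in>shift_support N \<mu>. ser_pd p g (\<mu> - mon_var (succ_var p)))"
    by (rule sum.cong[OF refl]) (auto simp: shift_support_def ser_mult_var in_keys_iff)
  finally show ?thesis .
qed

lemma shift_op_lincomb: "shift_op N (\<lambda>\<nu>. a * f \<nu> + b * g \<nu>) = (\<lambda>\<mu>. a * shift_op N f \<mu> + b * shift_op N g \<mu>)"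
  by (rule ext) (simp add: shift_op_eq_sum ser_pd_apply sum.distrib sum_distrib_left algebra_simps)

lemma shift_op_one: "shift_op N ser_one = (\<lambda>_. 0)"
  by (rule ext) (simp add: shift_op_eq_sum ser_pd_apply ser_one_def)

lemma shift_op_zero: "shift_op N (\<lambda>_. 0) = (\<lambda>_. 0)"
  by (rule ext) (simp add: shift_op_eq_sum ser_pd_apply)

lemma shift_op_in_ideal: "in_ideal j g \<Longrightarrow> in_ideal (Suc j) (shift_op N g)"
  unfolding in_ideal_def
proof (intro allI impI)
  fix \<mu> assume g: "\<forall>m. g m \<noteq> 0 \<longrightarrow> j \<le> gdeg m" and nz: "shift_op N g \<mu> \<noteq> 0"
  then obtain p where p: "p \<in> shift_support N \<mu>" "ser_pd p g (\<mu> - mon_var (succ_var p)) \<noteq> 0"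
    unfolding shift_op_eq_sum by (meson sum.neutral)
  hence "g (\<mu> - mon_var (succ_var p) + mon_var p) \<noteq> 0" by (simp add: ser_pd_apply)
  hence "j \<le> gdeg (\<mu> - mon_var (succ_var p) + mon_var p)" using g by blast
  moreover have "1 \<le> lookup \<mu> (succ_var p)" using p(1) by (auto simp: shift_support_def in_keys_iff)
  ultimately show "Suc j \<le> gdeg \<mu>" using gdeg_minus_mon_var[of \<mu> "succ_var p"] by simp
qed

lemma shift_op_var: "\<alpha> \<in> {1..N} \<Longrightarrow> shift_op N (ser_var (\<alpha>, k)) = ser_var (\<alpha>, Suc k)"
proof (rule ext)
  fix \<mu> assume a: "\<alpha> \<in> {1..N}"
  have t: "ser_pd p (ser_var (\<alpha>, k)) \<nu> = (if p = (\<alpha>, k) \<and> \<nu> = 0 then 1 else 0)" for p \<nu>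
    using add_mon_var_eq_mon_var_iff[of \<nu> p "(\<alpha>, k)"] by (simp add: ser_pd_apply ser_var_def)
  show "shift_op N (ser_var (\<alpha>, k)) \<mu> = ser_var (\<alpha>, Suc k) \<mu>"
  proof (cases "\<mu> = mon_var (\<alpha>, Suc k)")
    case True
    have "shift_op N (ser_var (\<alpha>, k)) \<mu> = (\<Sum>p\<in>shift_support N \<mu>. if p = (\<alpha>, k) then 1 else 0)"
      unfolding shift_op_eq_sum t by (rule sum.cong[OF refl]) (auto simp: True)
    also have "\<dots> = 1" using a True finite_shift_support[of N \<mu>] by (simp add: shift_support_def)
    finally show ?thesis using True by (simp add: ser_var_def)
  next
    case False
    have "\<forall>p\<in>shift_support N \<mu>. (if p = (\<alpha>, k) \<and> \<mu> - mon_var (succ_var p) = 0 then 1 else 0) = (0::complex)"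
    proof
      fix p assume p: "p \<in> shift_support N \<mu>"
      have "1 \<le> lookup \<mu> (succ_var p)" using p by (auto simp: shift_support_def in_keys_iff)
      hence "\<mu> = \<mu> - mon_var (succ_var p) + mon_var (succ_var p)" by simp
      thus "(if p = (\<alpha>, k) \<and> \<mu> - mon_var (succ_var p) = 0 then 1 else 0) = (0::complex)" using False by auto
    qed
    thus ?thesis unfolding shift_op_eq_sum t using False by (simp add: ser_var_def)
  qed
qed

lemma shift_op_pd10: "shift_op N (pd10 g) = pd10 (shift_op N g)"
proof (rule ext)
  fix \<mu>
  let ?e = "mon_var (1::nat, 0::nat)"
  have S: "shift_support N (\<mu> + ?e) = shift_support N \<mu>"
    unfolding shift_support_def by (auto simp: in_keys_iff lookup_single_if)
  have "pd10 (shift_op N g) \<mu>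
      = of_nat (lookup \<mu> (1,0) + 1) * (\<Sum>p\<in>shift_support N \<mu>. ser_pd p g (\<mu> + ?e - mon_var (succ_var p)))"
    unfolding ser_pd_apply shift_op_eq_sum S by (rule refl)
  also have "\<dots> = (\<Sum>p\<in>shift_support N \<mu>. ser_pd p (pd10 g) (\<mu> - mon_var (succ_var p)))"
    unfolding sum_distrib_left
  proof (rule sum.cong[OF refl])
    fix p assume p: "p \<in> shift_support N \<mu>"
    hence l: "1 \<le> lookup \<mu> (succ_var p)" by (auto simp: shift_support_def in_keys_iff)
    let ?\<nu> = "\<mu> - mon_var (succ_var p)"
    have e1: "\<mu> + ?e - mon_var (succ_var p) = ?\<nu> + ?e"
      by (rule poly_mapping_eqI) (use l in \<open>auto simp: lookup_single_if\<close>)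
    have e2: "?\<nu> + ?e + mon_var p = ?\<nu> + mon_var p + ?e" by (simp add: algebra_simps)
    have l10: "lookup ?\<nu> (1,0) = lookup \<mu> (1,0)" by (auto simp: lookup_single_if)
    show "of_nat (lookup \<mu> (1,0) + 1) * ser_pd p g (\<mu> + ?e - mon_var (succ_var p)) = ser_pd p (pd10 g) ?\<nu>"
      unfolding e1 ser_pd_apply e2 using l10
      by (cases "p = (1,0)") (auto simp: lookup_single_if algebra_simps)
  qed
  also have "\<dots> = shift_op N (pd10 g) \<mu>" by (simp add: shift_op_eq_sum)
  finally show "shift_op N (pd10 g) \<mu> = pd10 (shift_op N g) \<mu>" by simp
qed

lemma shift_op_iter_lincomb:
  "(shift_op N ^^ n) (\<lambda>\<nu>. a * f \<nu> + b * g \<nu>) = (\<lambda>\<mu>. a * (shift_op N ^^ n) f \<mu> + b * (shift_op N ^^ n) g \<mu>)"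
  by (induction n) (simp_all add: shift_op_lincomb)

lemma shift_op_iter_one: "(shift_op N ^^ n) ser_one = (if n = 0 then ser_one else (\<lambda>_. 0))"
  by (induction n) (auto simp: shift_op_one shift_op_zero)

lemma shift_op_iter_pd10: "(shift_op N ^^ n) (pd10 g) = pd10 ((shift_op N ^^ n) g)"
  by (induction n) (simp_all only: funpow.simps comp_apply id_apply shift_op_pd10)

lemma pd10_iter:
  assumes S: "pd10 v = (\<lambda>\<mu>. 1 * shift_op N v \<mu> + c * ser_one \<mu>)"
  shows "(pd10 ^^ n) v = (\<lambda>\<mu>. 1 * (shift_op N ^^ n) v \<mu> + (if n = 1 then c else 0) * ser_one \<mu>)"
proof (induction n)
  case 0 thus ?case by simp
next
  case (Suc n)
  have "(pd10 ^^ Suc n) v = pd10 ((pd10 ^^ n) v)" by simp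
  also have "\<dots> = (\<lambda>\<mu>. 1 * pd10 ((shift_op N ^^ n) v) \<mu> + (if n = 1 then c else 0) * pd10 ser_one \<mu>)"
    unfolding Suc ser_pd_lincomb ..
  also have "pd10 ((shift_op N ^^ n) v) = (shift_op N ^^ n) (pd10 v)" by (rule shift_op_iter_pd10[symmetric])
  also have "\<dots> = (\<lambda>\<mu>. 1 * (shift_op N ^^ n) (shift_op N v) \<mu> + c * (shift_op N ^^ n) ser_one \<mu>)"
    unfolding S shift_op_iter_lincomb ..
  also have "(shift_op N ^^ n) (shift_op N v) = (shift_op N ^^ Suc n) v" by (simp add: funpow_swap1)
  finally show ?case by (auto simp: ser_pd_one shift_op_iter_one fun_eq_iff)
qed

lemma shift_op_iter_var: "\<alpha> \<in> {1..N} \<Longrightarrow> (shift_op N ^^ n) (ser_var (\<alpha>, 0)) = ser_var (\<alpha>, n)"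
  by (induction n) (simp_all add: shift_op_var)

lemma shift_op_iter_in_ideal: "in_ideal j g \<Longrightarrow> in_ideal (j + n) ((shift_op N ^^ n) g)"
  by (induction n) (simp_all add: shift_op_in_ideal)

section \<open>The solution \<open>vt\<close>\<close>

locale vt_system =
  fixes N :: nat and vt :: "nat \<Rightarrow> ser"
  assumes vt_valid: "\<forall>\<alpha>\<in>{1..N}. valid N (vt \<alpha>)"
    and vt_init: "\<forall>\<alpha>\<in>{1..N}. restr0 (vt \<alpha>) = ser_var (\<alpha>, 0)"
    and vt_S: "\<forall>\<alpha>\<in>{1..N}. opS N (vt \<alpha>) = (if \<alpha> = 1 then ser_one else ser_zero)"
    and vt_D: "\<forall>\<alpha>\<in>{1..N}. opD N (vt \<alpha>) = ser_zero"
begin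

definition vt_tail :: "nat \<Rightarrow> ser" where "vt_tail \<alpha> = (\<lambda>\<mu>. vt \<alpha> \<mu> - ser_var (\<alpha>, 0) \<mu>)"

lemma pd10_vt:
  "\<alpha> \<in> {1..N} \<Longrightarrow> pd10 (vt \<alpha>) = (\<lambda>\<mu>. 1 * shift_op N (vt \<alpha>) \<mu> + (if \<alpha> = 1 then 1 else 0) * ser_one \<mu>)"
proof (rule ext)
  fix \<mu> assume a: "\<alpha> \<in> {1..N}"
  have "opS N (vt \<alpha>) \<mu> = (if \<alpha> = 1 then ser_one else ser_zero) \<mu>" using vt_S a by simp
  thus "pd10 (vt \<alpha>) \<mu> = 1 * shift_op N (vt \<alpha>) \<mu> + (if \<alpha> = 1 then 1 else 0) * ser_one \<mu>"
    unfolding opS_eq_shift_op by (auto simp: ser_zero_def algebra_simps)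
qed

lemma vt_tail_in_ideal: "\<alpha> \<in> {1..N} \<Longrightarrow> in_ideal 1 (vt_tail \<alpha>)"
  unfolding in_ideal_def
proof (intro allI impI)
  fix \<mu> assume a: "\<alpha> \<in> {1..N}" and nz: "vt_tail \<alpha> \<mu> \<noteq> 0"
  show "1 \<le> gdeg \<mu>"
  proof (rule ccontr)
    assume "\<not> 1 \<le> gdeg \<mu>"
    hence "gdeg \<mu> = 0" by simp
    hence "\<forall>x\<in>keys \<mu>. snd x = 0" by (simp add: gdeg_eq_0_iff)
    hence "vt \<alpha> \<mu> = restr0 (vt \<alpha>) \<mu>" by (simp add: restr0_def)
    also have "\<dots> = ser_var (\<alpha>, 0) \<mu>" using vt_init a by simp
    finally show False using nz by (simp add: vt_tail_def)
  qed
qed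

text \<open>By \<open>vt_S\<close>, \<open>\<partial>/\<partial>t\<^sup>1\<^sub>0\<close> acts on \<open>vt \<alpha>\<close> as \<open>shift_op\<close>, which sends \<open>t\<^sup>\<alpha>\<^sub>0\<close> to \<open>t\<^sup>\<alpha>\<^sub>n\<close>
  after \<open>n\<close> steps and raises the grading of the rest \<open>vt_tail \<alpha>\<close>.\<close>

lemma wt_eq:
  "\<alpha> \<in> {1..N} \<Longrightarrow> wt vt (\<alpha>, n) = (\<lambda>\<mu>. ser_var (\<alpha>, n) \<mu> + (shift_op N ^^ n) (vt_tail \<alpha>) \<mu>)"
proof (rule ext)
  fix \<mu> assume a: "\<alpha> \<in> {1..N}"
  have p: "(pd10 ^^ n) (vt \<alpha>)
      = (\<lambda>\<mu>. 1 * (shift_op N ^^ n) (vt \<alpha>) \<mu> + (if n = 1 then (if \<alpha> = 1 then 1 else 0) else 0) * ser_one \<mu>)"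
    by (rule pd10_iter[OF pd10_vt[OF a]])
  have v: "vt \<alpha> = (\<lambda>\<mu>. 1 * ser_var (\<alpha>, 0) \<mu> + 1 * vt_tail \<alpha> \<mu>)" by (simp add: vt_tail_def fun_eq_iff)
  have l: "(shift_op N ^^ n) (vt \<alpha>) \<mu> = ser_var (\<alpha>, n) \<mu> + (shift_op N ^^ n) (vt_tail \<alpha>) \<mu>"
    by (subst v, subst shift_op_iter_lincomb) (simp add: shift_op_iter_var[OF a])
  show "wt vt (\<alpha>, n) \<mu> = ser_var (\<alpha>, n) \<mu> + (shift_op N ^^ n) (vt_tail \<alpha>) \<mu>"
    unfolding wt_def using p l by (auto simp: ser_one_def)
qed

lemma unitriangular_wt: "unitriangular N (wt vt)"
  unfolding unitriangular_def
proof (intro allI impI)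
  fix x :: "nat \<times> nat" assume "fst x \<in> {1..N}"
  then obtain \<alpha> n where x: "x = (\<alpha>, n)" and a: "\<alpha> \<in> {1..N}" by (cases x) auto
  have I: "in_ideal (Suc n) ((shift_op N ^^ n) (vt_tail \<alpha>))"
    using shift_op_iter_in_ideal[OF vt_tail_in_ideal[OF a], of n N] by simp
  have w: "wt vt x = (\<lambda>\<mu>. ser_var (\<alpha>, n) \<mu> + (shift_op N ^^ n) (vt_tail \<alpha>) \<mu>)"
    using wt_eq[OF a] x by simp
  have A: "in_ideal (snd x) (wt vt x)"
    unfolding in_ideal_def w
  proof (intro allI impI)
    fix \<mu> assume "ser_var (\<alpha>, n) \<mu> + (shift_op N ^^ n) (vt_tail \<alpha>) \<mu> \<noteq> 0"
    hence "\<mu> = mon_var (\<alpha>, n) \<or> (shift_op N ^^ n) (vt_tail \<alpha>) \<mu> \<noteq> 0"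
      by (auto simp: ser_var_def split: if_splits)
    thus "snd x \<le> gdeg \<mu>" using I x unfolding in_ideal_def by fastforce
  qed
  have B: "\<forall>\<mu>. gdeg \<mu> = snd x \<longrightarrow> wt vt x \<mu> = (if \<mu> = mon_var x then 1 else 0)"
  proof (intro allI impI)
    fix \<mu> assume g: "gdeg \<mu> = snd x"
    hence "(shift_op N ^^ n) (vt_tail \<alpha>) \<mu> = 0" using I x unfolding in_ideal_def by fastforce
    thus "wt vt x \<mu> = (if \<mu> = mon_var x then 1 else 0)" unfolding w using x by (simp add: ser_var_def)
  qed
  have C: "\<forall>\<mu>. wt vt x \<mu> \<noteq> 0 \<longrightarrow> 1 \<le> total_degree \<mu>"
  proof (intro allI impI)
    fix \<mu> assume "wt vt x \<mu> \<noteq> 0"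
    hence "\<mu> = mon_var (\<alpha>, n) \<or> (shift_op N ^^ n) (vt_tail \<alpha>) \<mu> \<noteq> 0"
      unfolding w by (auto simp: ser_var_def split: if_splits)
    moreover have "(shift_op N ^^ n) (vt_tail \<alpha>) \<mu> \<noteq> 0 \<Longrightarrow> \<mu> \<noteq> 0" using I unfolding in_ideal_def by fastforce
    moreover have "mon_var (\<alpha>, n) \<noteq> 0" using add_single_neq_zero[of 1 0 "(\<alpha>, n)"] by simp
    ultimately have "\<mu> \<noteq> 0" by auto
    thus "1 \<le> total_degree \<mu>" using total_degree_eq_0_iff[of \<mu>] by simp
  qed
  show "in_ideal (snd x) (wt vt x) \<and> (\<forall>\<mu>. gdeg \<mu> = snd x \<longrightarrow> wt vt x \<mu> = (if \<mu> = mon_var x then 1 else 0))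
        \<and> (\<forall>\<mu>. wt vt x \<mu> \<noteq> 0 \<longrightarrow> 1 \<le> total_degree \<mu>)" using A B C by blast
qed

lemma Dop_graded_wt: "Dop_graded N (wt vt)"
  unfolding Dop_graded_def
proof (intro allI impI)
  fix x :: "nat \<times> nat" assume "fst x \<in> {1..N}"
  then obtain \<alpha> n where x: "x = (\<alpha>, n)" and a: "\<alpha> \<in> {1..N}" by (cases x) auto
  let ?v = "(pd10 ^^ n) (vt \<alpha>)" and ?c = "if x = v11 then 1 else (0::complex)"
  have w: "wt vt x = (\<lambda>\<mu>. 1 * ?v \<mu> + (- ?c) * ser_one \<mu>)"
    by (rule ext) (simp add: wt_def x ser_one_def)
  have D0: "Dop (vt \<alpha>) = (\<lambda>_. 0)"
    using opD_eq_Dop[of N "vt \<alpha>"] vt_valid vt_D a by (simp add: ser_zero_def)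
  show "Dop (wt vt x) = (\<lambda>\<mu>. of_nat (snd x) * wt vt x \<mu> + (if x = v11 then ser_one \<mu> else 0))"
  proof (rule ext)
    fix \<mu>
    have "Dop (wt vt x) \<mu> = Dop ?v \<mu>" unfolding w Dop_lincomb Dop_one by simp
    also have "\<dots> = of_nat n * ?v \<mu>" using Dop_pd10_iter[OF D0] by simp
    also have "\<dots> = of_nat (snd x) * wt vt x \<mu> + (if x = v11 then ser_one \<mu> else 0)"
      unfolding w using x by (auto simp: algebra_simps)
    finally show "Dop (wt vt x) \<mu> = of_nat (snd x) * wt vt x \<mu> + (if x = v11 then ser_one \<mu> else 0)" .
  qed
qed

end

theorem lemma4p5:
  fixes N :: nat and vt :: "nat \<Rightarrow> ser" and f F :: ser and d :: int
  assumes N1: "1 \<le> N"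
    and vt_valid: "\<forall>\<alpha>\<in>{1..N}. valid N (vt \<alpha>)"
    and vt_init: "\<forall>\<alpha>\<in>{1..N}. restr0 (vt \<alpha>) = ser_var (\<alpha>, 0)"
    and vt_S: "\<forall>\<alpha>\<in>{1..N}. opS N (vt \<alpha>) = (if \<alpha> = 1 then ser_one else ser_zero)"
    and vt_D: "\<forall>\<alpha>\<in>{1..N}. opD N (vt \<alpha>) = ser_zero"
    and f_valid: "valid N f"
    and f_D: "opD N f = (\<lambda>m. of_int d * f m)"
    and F_valid: "valid N F"
    and F_pre: "Phi vt F = f"
  shows "Art N d F
    \<and> (\<forall>(k::nat) (h::nat \<Rightarrow> ser).
          in_ideal k f \<and> (\<forall>i\<ge>k. homog i (h i)) \<and> f = (\<lambda>m. fsum (\<lambda>i. h i m) {k..})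
          \<longrightarrow> (\<exists>P::nat \<Rightarrow> ser.
                 (\<forall>i\<ge>k. Av_deg N (int i) (P i) \<and> ser_pd (1, 1) (P i) = ser_zero)
               \<and> F = (\<lambda>\<mu>. fsum (\<lambda>i. ser_mult (P i) (vx_pow (d - int i)) \<mu>) {k..})
               \<and> P k = h k))"
proof -
  interpret vt_system N vt by unfold_locales (fact vt_valid vt_init vt_S vt_D)+
  have W: "unitriangular N (wt vt)" "Dop_graded N (wt vt)"
    by (rule unitriangular_wt, rule Dop_graded_wt)
  have fF: "subst_ser (wt vt) F = f" using F_pre by (simp add: Phi_eq_subst_ser)
  have "Dop f = (\<lambda>m. of_int d * f m)" using f_D opD_eq_Dop[OF f_valid] by simp
  then have binom: "v11_binomial d F"
    using Dop_coeff_eigen[OF W F_valid] fF Dop_coeff_eigen_imp_v11_binomial by simp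
  have "\<exists>P. (\<forall>i\<ge>k. Av_deg N (int i) (P i) \<and> ser_pd (1, 1) (P i) = ser_zero)
            \<and> F = (\<lambda>\<mu>. fsum (\<lambda>i. ser_mult (P i) (vx_pow (d - int i)) \<mu>) {k..}) \<and> P k = h k"
    if f_low: "in_ideal k f" and h: "\<forall>i\<ge>k. homog i (h i)" "f = (\<lambda>m. fsum (\<lambda>i. h i m) {k..})"
    for k h
  proof (intro exI conjI)
    have F_low: "in_ideal k F" using in_ideal_subst_serD[OF W(1) F_valid] f_low fF by simp
    show "\<forall>i\<ge>k. Av_deg N (int i) (v11_free_part (int i) F)
        \<and> ser_pd (1, 1) (v11_free_part (int i) F) = ser_zero"
      using Av_deg_v11_free_part[OF F_valid] ser_pd_v11_free_part by blast
    show "F = (\<lambda>\<mu>. fsum (\<lambda>i. ser_mult (v11_free_part (int i) F) (vx_pow (d - int i)) \<mu>) {k..})"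
      by (rule v11_binomial_expansion[OF binom F_low])
    have "F m = f m" if "gdeg m = k" for m
      using subst_ser_lowest[OF W(1) F_valid F_low, of m] that fF by simp
    then show "v11_free_part (int k) F = h k"
      unfolding v11_free_part_lowest[OF binom F_low] homog_expansion_lowest[OF h] by auto
  qed
  then show ?thesis using Art_if_v11_binomial[OF F_valid binom] by blast
qed

end
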